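(* Let $L:\mathbb{T}^d\times\mathbb{R}^d\to\mathbb{R}$ be continuous with $\lim_{|v|\to\infty}\inf_{x\in\mathbb{T}^d}L(x,v)/|v|=+\infty$, and let $(\varphi,\overline{H})$ be a viscosity solution to $H(x,-\nabla\varphi)=\overline{H}$. Then for every $y\in\mathbb{T}^d$, \[\lim_{r\to+\infty}\inf\Big\{\frac1r\int_0^rL(x(t),v(t))\,dt:\ (x,v)\text{ a controlled process on }[0,r],\ x(0)=y\Big\}=-\overline{H}.\] Furthermore, given $\varepsilon>0$, there exists $\varkappa_0>0$ such that for every $\varkappa\in(0,\varkappa_0]$ and $y\in\mathbb{T}^d$, \[\lim_{r\to+\infty}\limsup_{d(\Delta)\downarrow0}\frac1r\int_0^rL(x_{y,\varkappa,r,\Delta}(t),v_{y,\varkappa,r,\Delta}(t))\,dt\le-\overline{H}+\varepsilon.\]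
   Context: $\mathbb{T}^d=\mathbb{R}^d/\mathbb{Z}^d$; $x+v$ is the translate of $x\in\mathbb{T}^d$ by $v\in\mathbb{R}^d$. $H(x,p)=\max_{v\in\mathbb{R}^d}[pv-L(x,v)]$. Hadamard sub/superdifferentials: $p\in\partial_D^\mp\varphi(x)$ iff for all $w$, $\liminf_{h\downarrow0,w'\to w}\frac{\varphi(x+hw')-\varphi(x)}{h}\ge pw$ (resp. $\limsup\ldots\le pw$). $(\varphi,\overline{H})$, $\varphi$ continuous, is a viscosity solution if $H(x,-p)\le\overline{H}$ for $p\in\partial_D^+\varphi(x)$ and $H(x,-p)\ge\overline{H}$ for $p\in\partial_D^-\varphi(x)$, all $x$. A controlled process on $[0,r]$ is $(x,v)$ with $v\in L^1([0,r];\mathbb{R}^d)$, $x\in C([0,r];\mathbb{T}^d)$, $x(s)=x(0)+\int_0^sv\,dt$. Feedback: $\varphi_\varkappa(x)=\inf_v\{\varphi(x+v)+\frac1{2\varkappa^2}|v|^2\}$; $b_\varkappa[x]$ a chosen minimizer, $p_\varkappa[x]=\frac1{\varkappa^2}(-b_\varkappa[x])^\top$, $\mathbbm{v}_\varkappa[x]\in\operatorname{Argmax}_v[-p_\varkappa[x]v-L(x+b_\varkappa[x],v)]$. For a partition $\Delta=\{t_i\}_{i=0}^n$ of $[0,r]$ with fineness $d(\Delta)=\max_i(t_{i+1}-t_i)$: $x_{y,\varkappa,r,\Delta}(0)=y$, and on $[t_i,t_{i+1})$, $v_{y,\varkappa,r,\Delta}(t)=\mathbbm{v}_\varkappa[x_{y,\varkappa,r,\Delta}(t_i)]$,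 $x_{y,\varkappa,r,\Delta}(t)=x_{y,\varkappa,r,\Delta}(t_i)+(t-t_i)\mathbbm{v}_\varkappa[x_{y,\varkappa,r,\Delta}(t_i)]$. *)

theory Defs
  imports "HOL-Analysis.Analysis"
begin

(* The torus T^d = R^d / Z^d is modelled through its universal cover R^d = 'a::euclidean_space
   (d = DIM('a)); functions on T^d are Z^d-periodic functions on R^d. *)

definition int_lattice :: "'a::euclidean_space set" where
  "int_lattice = {k. \<forall>b\<in>Basis. k \<bullet> b \<in> \<int>}"

definition periodic_fun :: "('a::euclidean_space \<Rightarrow> 'b) \<Rightarrow> bool" where
  "periodic_fun f \<longleftrightarrow> (\<forall>x. \<forall>k\<in>int_lattice. f (x + k) = f x)"

definition Ham :: "('a::euclidean_space \<Rightarrow> 'a \<Rightarrow> real) \<Rightarrow> 'a \<Rightarrow> 'a \<Rightarrow> real" where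
  "Ham L x p = (SUP v. p \<bullet> v - L x v)"

definition hadamard_subdiff :: "('a::euclidean_space \<Rightarrow> real) \<Rightarrow> 'a \<Rightarrow> 'a set" where
  "hadamard_subdiff \<phi> x = {p. \<forall>w.
     Liminf (at_right 0 \<times>\<^sub>F nhds w) (\<lambda>(h, w'). ereal ((\<phi> (x + h *\<^sub>R w') - \<phi> x) / h))
       \<ge> ereal (p \<bullet> w)}"

definition hadamard_superdiff :: "('a::euclidean_space \<Rightarrow> real) \<Rightarrow> 'a \<Rightarrow> 'a set" where
  "hadamard_superdiff \<phi> x = {p. \<forall>w.
     Limsup (at_right 0 \<times>\<^sub>F nhds w) (\<lambda>(h, w'). ereal ((\<phi> (x + h *\<^sub>R w') - \<phi> x) / h))
       \<le> ereal (p \<bullet> w)}"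

definition viscosity_solution ::
  "('a::euclidean_space \<Rightarrow> 'a \<Rightarrow> real) \<Rightarrow> ('a \<Rightarrow> real) \<Rightarrow> real \<Rightarrow> bool" where
  "viscosity_solution L \<phi> Hbar \<longleftrightarrow>
     continuous_on UNIV \<phi> \<and> periodic_fun \<phi> \<and>
     (\<forall>x. \<forall>p\<in>hadamard_superdiff \<phi> x. Ham L x (- p) \<le> Hbar) \<and>
     (\<forall>x. \<forall>p\<in>hadamard_subdiff \<phi> x. Ham L x (- p) \<ge> Hbar)"

definition controlled_process ::
  "real \<Rightarrow> 'a::euclidean_space \<Rightarrow> (real \<Rightarrow> 'a) \<Rightarrow> (real \<Rightarrow> 'a) \<Rightarrow> bool" where
  "controlled_process r y x v \<longleftrightarrow>
     set_integrable lborel {0..r} v \<and>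
     (\<forall>s\<in>{0..r}. x s = y + (LINT t:{0..s}|lborel. v t))"

(* cost int_0^r L(x,v) dt; since L is bounded below, a non-integrable integrand has cost +infinity *)
definition cost :: "('a::euclidean_space \<Rightarrow> 'a \<Rightarrow> real) \<Rightarrow> real \<Rightarrow> (real \<Rightarrow> 'a) \<Rightarrow> (real \<Rightarrow> 'a) \<Rightarrow> ereal" where
  "cost L r x v =
     (if set_integrable lborel {0..r} (\<lambda>t. L (x t) (v t))
      then ereal (LINT t:{0..r}|lborel. L (x t) (v t)) else \<infinity>)"

definition avg_value :: "('a::euclidean_space \<Rightarrow> 'a \<Rightarrow> real) \<Rightarrow> real \<Rightarrow> 'a \<Rightarrow> ereal" where
  "avg_value L r y =
     (INF xv\<in>{(x, v). controlled_process r y x v}. cost L r (fst xv) (snd xv)) / ereal r"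

definition is_partition :: "real \<Rightarrow> nat \<times> (nat \<Rightarrow> real) \<Rightarrow> bool" where
  "is_partition r P \<longleftrightarrow> (case P of (n, t) \<Rightarrow>
     0 < n \<and> t 0 = 0 \<and> t n = r \<and> (\<forall>i<n. t i < t (Suc i)))"

definition fineness :: "nat \<times> (nat \<Rightarrow> real) \<Rightarrow> real" where
  "fineness P = (case P of (n, t) \<Rightarrow> Max ((\<lambda>i. t (Suc i) - t i) ` {..<n}))"

fun fb_node :: "('a::real_vector \<Rightarrow> 'a) \<Rightarrow> 'a \<Rightarrow> (nat \<Rightarrow> real) \<Rightarrow> nat \<Rightarrow> 'a" where
  "fb_node V y t 0 = y"
| "fb_node V y t (Suc i) = fb_node V y t i + (t (Suc i) - t i) *\<^sub>R V (fb_node V y t i)"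

definition seg_index :: "nat \<times> (nat \<Rightarrow> real) \<Rightarrow> real \<Rightarrow> nat" where
  "seg_index P s = (case P of (n, t) \<Rightarrow> (THE i. i < n \<and> t i \<le> s \<and> s < t (Suc i)))"

definition fb_v :: "('a::real_vector \<Rightarrow> 'a) \<Rightarrow> 'a \<Rightarrow> nat \<times> (nat \<Rightarrow> real) \<Rightarrow> real \<Rightarrow> 'a" where
  "fb_v V y P s = V (fb_node V y (snd P) (seg_index P s))"

definition fb_x :: "('a::real_vector \<Rightarrow> 'a) \<Rightarrow> 'a \<Rightarrow> nat \<times> (nat \<Rightarrow> real) \<Rightarrow> real \<Rightarrow> 'a" where
  "fb_x V y P s = (let i = seg_index P s in
     fb_node V y (snd P) i + (s - snd P i) *\<^sub>R V (fb_node V y (snd P) i))"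

definition fb_avg_cost ::
  "('a::euclidean_space \<Rightarrow> 'a \<Rightarrow> real) \<Rightarrow> ('a \<Rightarrow> 'a) \<Rightarrow> 'a \<Rightarrow> real \<Rightarrow> nat \<times> (nat \<Rightarrow> real) \<Rightarrow> real" where
  "fb_avg_cost L V y r P = (LINT s:{0..r}|lborel. L (fb_x V y P s) (fb_v V y P s)) / r"

definition limsup_fine :: "real \<Rightarrow> (nat \<times> (nat \<Rightarrow> real) \<Rightarrow> real) \<Rightarrow> ereal" where
  "limsup_fine r F =
     (INF \<delta>\<in>{0<..}. SUP P\<in>{P. is_partition r P \<and> fineness P < \<delta>}. ereal (F P))"

end

(* Let phi_kappa be the inf-convolution of phi with |.|^2 / (2 kappa^2) and phi^kappa the
   sup-convolution. At the minimiser x + b of phi_kappa a paraboloid touches phi from below, so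
   the subsolution inequality and the choice of the feedback v give
   L (x + b, v) <= -Hbar + b.v / kappa^2, and a feedback step of length tau costs at most
   -Hbar tau + phi_kappa x - phi_kappa (x + tau v) + O(tau^2 / kappa^2). Superlinearity bounds
   the feedback speeds, and phi is Lipschitz because the supersolution inequality bounds its
   superdifferentials, so b = O(kappa^2); uniform continuity of L absorbs
   both b and the motion within a step: along a fine partition phi_kappa telescopes and the cost
   on [0, r] is at most (-Hbar + eps) r + 2 sup |phi|.
   Dually, at the maximiser of phi^kappa a paraboloid touches phi from above and the
   supersolution inequality bounds L from below near that point; along any controlled process,
   cut into pieces on which it moves little, phi^kappa telescopes and the cost is at least
   (-Hbar - eps) r - 2 sup |phi|. *)

theory Submission
  imports Defs
begin

section \<open>Periodic functions\<close>

lemma int_lattice_translate_into_cube: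
  fixes z :: "'a::euclidean_space"
  obtains k where "k \<in> int_lattice" "z - k \<in> cbox 0 One"
proof
  define k where "k = (\<Sum>b\<in>Basis. of_int \<lfloor>z \<bullet> b\<rfloor> *\<^sub>R (b::'a))"
  have kb: "k \<bullet> b = of_int \<lfloor>z \<bullet> b\<rfloor>" if "b \<in> Basis" for b
    using that unfolding k_def by (simp add: inner_sum_left inner_Basis if_distrib cong: if_cong)
  then show "k \<in> int_lattice" unfolding int_lattice_def by auto
  show "z - k \<in> cbox 0 One"
    unfolding mem_box using kb by (auto simp: inner_diff_left) linarith+
qed

lemma periodic_fun_translate:
  assumes "periodic_fun f" "k \<in> int_lattice"
  shows "f (z - k) = f z"
  using assms unfolding periodic_fun_def by (metis diff_add_cancel)

lemma periodic_bounded_on_compact: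
  fixes f :: "'a::euclidean_space \<Rightarrow> 'b::topological_space \<Rightarrow> real"
  assumes cont: "continuous_on UNIV (\<lambda>(x, u). f x u)"
    and per: "\<And>u. periodic_fun (\<lambda>x. f x u)"
    and S: "compact S"
  obtains C where "\<And>(z::'a) u. u \<in> S \<Longrightarrow> \<bar>f z u\<bar> \<le> C"
proof -
  have "compact ((\<lambda>(x, u). f x u) ` (cbox 0 One \<times> S))"
    by (intro compact_continuous_image continuous_on_subset[OF cont] compact_Times S) auto
  then obtain C where C: "\<And>c. c \<in> (\<lambda>(x, u). f x u) ` (cbox 0 One \<times> S) \<Longrightarrow> \<bar>c\<bar> \<le> C"
    using compact_imp_bounded bounded_real by metis
  show ?thesis
  proof
    fix z :: 'a and u assume u: "u \<in> S"
    obtain k where k: "k \<in> int_lattice" "z - k \<in> cbox 0 One"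
      using int_lattice_translate_into_cube .
    have "f z u = f (z - k) u" using periodic_fun_translate[OF per k(1)] by simp
    also have "\<bar>\<dots>\<bar> \<le> C" using C k u by force
    finally show "\<bar>f z u\<bar> \<le> C" .
  qed
qed

lemma periodic_bounded:
  fixes \<phi> :: "'a::euclidean_space \<Rightarrow> real"
  assumes "continuous_on UNIV \<phi>" "periodic_fun \<phi>"
  shows "bounded (range \<phi>)"
proof -
  have "continuous_on UNIV (\<lambda>(x, u::real). \<phi> x)"
    unfolding case_prod_beta by (intro continuous_on_compose2[OF assms(1)] continuous_intros) auto
  then obtain C where "\<And>z. \<bar>\<phi> z\<bar> \<le> C"
    using periodic_bounded_on_compact[of "\<lambda>x u::real. \<phi> x" "{0}"] assms(2) by auto
  then show ?thesis unfolding bounded_iff by auto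
qed

lemma Ham_le:
  assumes "\<And>u. q \<bullet> u - L z u \<le> c"
  shows "Ham L z q \<le> c"
  unfolding Ham_def by (rule cSUP_least) (use assms in auto)

section \<open>Hadamard differentials of touching functions\<close>

lemma hadamard_superdiff_iff_subdiff_uminus:
  "p \<in> hadamard_superdiff \<phi> x \<longleftrightarrow> - p \<in> hadamard_subdiff (\<lambda>z. - \<phi> z) x"
proof -
  have "(\<lambda>(h, w'). ereal ((- \<phi> (x + h *\<^sub>R w') - - \<phi> x) / h))
      = (\<lambda>y. - (\<lambda>(h, w'). ereal ((\<phi> (x + h *\<^sub>R w') - \<phi> x) / h)) y)"
    by (auto simp: fun_eq_iff minus_divide_left)
  then show ?thesis
    unfolding hadamard_superdiff_def hadamard_subdiff_def
    by (simp add: ereal_Liminf_uminus ereal_minus_le_minus flip: uminus_ereal.simps(1))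
qed

lemma quadratic_minorant_imp_hadamard_subdiff:
  fixes \<phi> :: "'a::euclidean_space \<Rightarrow> real"
  assumes minor: "\<And>w. \<phi> z + p \<bullet> w - c * (norm w)\<^sup>2 \<le> \<phi> (z + w)"
  shows "p \<in> hadamard_subdiff \<phi> z"
  unfolding hadamard_subdiff_def
proof (intro CollectI allI le_Liminf_iff[THEN iffD2] impI)
  fix w :: 'a and y :: ereal assume y: "y < ereal (p \<bullet> w)"
  define F where "F = at_right (0::real) \<times>\<^sub>F nhds w"
  have fst: "filterlim fst (at_right 0) F" and snd: "filterlim snd (nhds w) F"
    unfolding F_def by (rule filterlim_fst filterlim_snd)+
  have "((\<lambda>hw. p \<bullet> snd hw - c * fst hw * (norm (snd hw))\<^sup>2) \<longlongrightarrow> p \<bullet> w - c * 0 * (norm w)\<^sup>2) F"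
    by (intro tendsto_intros snd filterlim_mono[OF fst at_within_le_nhds order_refl])
  then have "((\<lambda>hw. ereal (p \<bullet> snd hw - c * fst hw * (norm (snd hw))\<^sup>2)) \<longlongrightarrow> ereal (p \<bullet> w)) F"
    by (intro tendsto_ereal) simp
  from order_tendstoD(1)[OF this y]
  have "eventually (\<lambda>hw. y < ereal (p \<bullet> snd hw - c * fst hw * (norm (snd hw))\<^sup>2)) F" .
  moreover have "eventually (\<lambda>hw. fst hw > 0) F"
    using fst unfolding filterlim_iff by (simp add: eventually_at_right_less)
  ultimately show "eventually (\<lambda>hw. y < (\<lambda>(h, w'). ereal ((\<phi> (z + h *\<^sub>R w') - \<phi> z) / h)) hw) F"
  proof eventually_elim
    case (elim hw)
    obtain h w' where hw: "hw = (h, w')" by fastforce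
    have h: "h > 0" using elim hw by simp
    have "h * (p \<bullet> w' - c * h * (norm w')\<^sup>2) \<le> \<phi> (z + h *\<^sub>R w') - \<phi> z"
      using minor[of "h *\<^sub>R w'"] h by (simp add: power2_eq_square algebra_simps)
    then have "p \<bullet> w' - c * h * (norm w')\<^sup>2 \<le> (\<phi> (z + h *\<^sub>R w') - \<phi> z) / h"
      using h by (simp add: pos_le_divide_eq mult.commute)
    then show ?case using elim hw by (auto intro: less_le_trans)
  qed
qed

lemma quadratic_majorant_imp_hadamard_superdiff:
  fixes \<phi> :: "'a::euclidean_space \<Rightarrow> real"
  assumes "\<And>w. \<phi> (z + w) \<le> \<phi> z + p \<bullet> w + c * (norm w)\<^sup>2"
  shows "p \<in> hadamard_superdiff \<phi> z"
  unfolding hadamard_superdiff_iff_subdiff_uminus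
  by (rule quadratic_minorant_imp_hadamard_subdiff) (use assms in \<open>force simp: algebra_simps\<close>)

lemma power2_norm_add:
  fixes a w :: "'a::real_inner"
  shows "(norm (a + w))\<^sup>2 = (norm a)\<^sup>2 + 2 * (a \<bullet> w) + (norm w)\<^sup>2"
  by (simp add: power2_norm_eq_inner inner_add algebra_simps inner_commute)

lemma norm_add_le_quadratic:
  fixes a w :: "'a::real_inner"
  assumes "a \<noteq> 0"
  shows "norm (a + w) \<le> norm a + (a \<bullet> w) / norm a + (norm w)\<^sup>2 / (2 * norm a)"
proof -
  have a: "norm a > 0" using assms by simp
  have "2 * norm a * norm (a + w) \<le> (norm (a + w))\<^sup>2 + (norm a)\<^sup>2"
    using zero_le_power2[of "norm (a + w) - norm a"] by (simp add: power2_diff algebra_simps)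
  also have "\<dots> = 2 * norm a * (norm a + (a \<bullet> w) / norm a + (norm w)\<^sup>2 / (2 * norm a))"
    unfolding power2_norm_add using a by (simp add: field_simps power2_eq_square)
  finally show ?thesis using a by simp
qed

lemma continuous_on_cball_global_max:
  fixes g :: "'a::euclidean_space \<Rightarrow> real"
  assumes cont: "continuous_on (cball c \<rho>) g" and \<rho>: "0 \<le> \<rho>"
    and outside: "\<And>z. z \<notin> cball c \<rho> \<Longrightarrow> g z \<le> g c"
  obtains z0 where "\<And>z. g z \<le> g z0"
proof -
  obtain z0 where z0: "\<And>z. z \<in> cball c \<rho> \<Longrightarrow> g z \<le> g z0"
    using continuous_attains_sup[OF compact_cball _ cont] \<rho> by (metis centre_in_cball empty_iff)
  have "g z \<le> g z0" for z
    using z0[of z] z0[of c] outside[of z] \<rho> by (cases "z \<in> cball c \<rho>") auto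
  then show ?thesis by (rule that)
qed

lemma cone_touching_imp_hadamard_superdiff:
  fixes \<phi> :: "'a::euclidean_space \<Rightarrow> real"
  assumes max: "\<And>z. \<phi> z - l * norm (z - x) \<le> \<phi> z0 - l * norm (z0 - x)"
    and "z0 \<noteq> x" "0 \<le> l"
  shows "(l / norm (z0 - x)) *\<^sub>R (z0 - x) \<in> hadamard_superdiff \<phi> z0"
proof (rule quadratic_majorant_imp_hadamard_superdiff)
  fix w
  define a where "a = z0 - x"
  have a: "a \<noteq> 0" using \<open>z0 \<noteq> x\<close> unfolding a_def by simp
  have "\<phi> (z0 + w) \<le> \<phi> z0 + l * (norm (a + w) - norm a)"
    using max[of "z0 + w"] unfolding a_def by (simp add: algebra_simps)
  also have "l * (norm (a + w) - norm a) \<le> l * ((a \<bullet> w) / norm a + (norm w)\<^sup>2 / (2 * norm a))"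
    using norm_add_le_quadratic[OF a, of w] \<open>0 \<le> l\<close> by (intro mult_left_mono) auto
  also have "\<dots> = (l / norm a) *\<^sub>R a \<bullet> w + (l / (2 * norm a)) * (norm w)\<^sup>2"
    by (simp add: field_simps)
  finally show "\<phi> (z0 + w) \<le> \<phi> z0 + (l / norm (z0 - x)) *\<^sub>R (z0 - x) \<bullet> w + (l / (2 * norm a)) * (norm w)\<^sup>2"
    unfolding a_def by simp
qed

lemma lipschitz_of_bounded_hadamard_superdiff:
  fixes \<phi> :: "'a::euclidean_space \<Rightarrow> real"
  assumes cont: "continuous_on UNIV \<phi>" and bnd: "bounded (range \<phi>)"
    and superdiff: "\<And>x p. p \<in> hadamard_superdiff \<phi> x \<Longrightarrow> norm p \<le> C"
    and l: "C < l" "0 < l"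
  shows "\<phi> z - \<phi> x \<le> l * norm (z - x)"
proof -
  obtain M where M: "\<And>z. \<bar>\<phi> z\<bar> \<le> M"
    using bnd unfolding bounded_real by auto
  define g where "g z = \<phi> z - l * norm (z - x)" for z
  have "continuous_on (cball x (2 * M / l)) g"
    unfolding g_def by (intro continuous_intros continuous_on_subset[OF cont]) auto
  moreover have "0 \<le> 2 * M / l" using M[of x] l by simp
  moreover have "g z \<le> g x" if "z \<notin> cball x (2 * M / l)" for z
  proof -
    have "2 * M \<le> l * norm (z - x)"
      using that l by (simp add: dist_norm norm_minus_commute field_simps)
    then show ?thesis unfolding g_def using M[of z] M[of x] by (simp add: abs_le_iff)
  qed
  ultimately obtain z0 where max: "\<And>z. g z \<le> g z0" by (metis continuous_on_cball_global_max)
  have "z0 = x"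
  proof (rule ccontr)
    assume "z0 \<noteq> x"
    with max have "(l / norm (z0 - x)) *\<^sub>R (z0 - x) \<in> hadamard_superdiff \<phi> z0"
      using l unfolding g_def by (intro cone_touching_imp_hadamard_superdiff) auto
    with superdiff \<open>z0 \<noteq> x\<close> l show False by force
  qed
  then show ?thesis using max[of z] unfolding g_def by simp
qed

lemma norm_le_of_quadratic_gain:
  assumes lip: "\<And>x z. \<phi> z - \<phi> x \<le> l * norm (z - x)"
    and l: "0 < l" and k: "\<kappa> > 0" and gain: "\<phi> x + (norm u)\<^sup>2 / (2 * \<kappa>\<^sup>2) \<le> \<phi> (x + u)"
  shows "norm u \<le> 2 * l * \<kappa>\<^sup>2"
proof -
  have "(norm u)\<^sup>2 / (2 * \<kappa>\<^sup>2) \<le> l * norm u" using lip[where x=x and z="x + u"] gain by simp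
  then have "norm u * norm u \<le> (2 * l * \<kappa>\<^sup>2) * norm u" using k by (simp add: field_simps power2_eq_square)
  then show ?thesis using l by (cases "norm u = 0") auto
qed

section \<open>Partitions and piecewise integrals\<close>

lemma is_partitionD:
  assumes "is_partition r (n, t)"
  shows "0 < n" "t 0 = 0" "t n = r" "\<And>i. i < n \<Longrightarrow> t i < t (Suc i)"
  using assms unfolding is_partition_def by auto

lemma partition_mono:
  assumes "is_partition r (n, t)" "i \<le> j" "j \<le> n"
  shows "t i \<le> t j"
proof (rule lift_Suc_mono_le_ivl[of "{..<n}"])
  show "\<And>k. k \<in> {..<n} \<Longrightarrow> t k \<le> t (Suc k)"
    using is_partitionD(4)[OF assms(1)] by (simp add: less_imp_le)
qed (use assms in auto)

lemma partition_step_le_fineness: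
  "i < n \<Longrightarrow> t (Suc i) - t i \<le> fineness (n, t)"
  unfolding fineness_def split by (rule Max_ge) auto

lemma uniform_partition:
  assumes r: "r > 0" and n: "n > 0"
  shows "is_partition r (n, \<lambda>i. r * real i / real n)"
    and "fineness (n, \<lambda>i. r * real i / real n) = r / n"
proof -
  show "is_partition r (n, \<lambda>i. r * real i / real n)"
    unfolding is_partition_def using r n by (auto simp: divide_strict_right_mono)
  have "(\<lambda>i. r * real (Suc i) / real n - r * real i / real n) ` {..<n} = {r / n}"
    using n by (auto simp: field_simps image_def intro!: bexI[of _ 0])
  then show "fineness (n, \<lambda>i. r * real i / real n) = r / n" unfolding fineness_def by simp
qed

lemma partition_with_fineness_less:
  assumes r: "r > 0" and \<delta>: "\<delta> > 0"
  obtains n t where "is_partition r (n, t)" "fineness (n, t) < \<delta>"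
proof -
  define n where "n = nat \<lceil>r / \<delta>\<rceil> + 1"
  have n: "n > 0" "r / \<delta> < real n" unfolding n_def by linarith+
  then have "r / real n < \<delta>" using \<delta> by (simp add: field_simps)
  then show ?thesis using uniform_partition[OF r n(1)] that by simp
qed

lemma partition_with_small_oscillation:
  fixes x :: "real \<Rightarrow> 'a::metric_space"
  assumes cont: "continuous_on {0..r} x" and r: "r > 0" and \<theta>: "\<theta> > 0"
  obtains n t where "is_partition r (n, t)"
    "\<And>i s. i < n \<Longrightarrow> s \<in> {t i..t (Suc i)} \<Longrightarrow> dist (x s) (x (t i)) < \<theta>"
proof -
  have "uniformly_continuous_on {0..r} x" by (rule compact_uniformly_continuous[OF cont compact_Icc])
  then obtain \<theta>0 where \<theta>0: "\<theta>0 > 0"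
    and uc: "\<And>s s'. s \<in> {0..r} \<Longrightarrow> s' \<in> {0..r} \<Longrightarrow> dist s' s < \<theta>0 \<Longrightarrow> dist (x s') (x s) < \<theta>"
    unfolding uniformly_continuous_on_def using \<theta> by metis
  obtain n t where P: "is_partition r (n, t)" and fin: "fineness (n, t) < \<theta>0"
    using partition_with_fineness_less[OF r \<theta>0] .
  have "dist (x s) (x (t i)) < \<theta>" if i: "i < n" "s \<in> {t i..t (Suc i)}" for i s
  proof (rule uc)
    show "t i \<in> {0..r}" "s \<in> {0..r}"
      using i partition_mono[OF P, of 0 i] partition_mono[OF P, of "Suc i" n] is_partitionD[OF P] by auto
    show "dist s (t i) < \<theta>0"
      using i partition_step_le_fineness[OF i(1), of t] fin by (simp add: dist_real_def)
  qed
  with P show ?thesis by (rule that)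
qed

lemma seg_index_eq:
  assumes P: "is_partition r (n, t)" and i: "i < n" "t i \<le> s" "s < t (Suc i)"
  shows "seg_index (n, t) s = i"
  unfolding seg_index_def split
proof (rule the_equality)
  show "i < n \<and> t i \<le> s \<and> s < t (Suc i)" using i by simp
  fix j assume j: "j < n \<and> t j \<le> s \<and> s < t (Suc j)"
  have False if "Suc j \<le> i" using partition_mono[OF P that] i j by simp
  moreover have False if "Suc i \<le> j" using partition_mono[OF P that] i j by simp
  ultimately show "j = i" by (meson Suc_leI linorder_neqE_nat)
qed

text \<open>A predicate rather than the functions \<open>fb_x\<close>, \<open>fb_v\<close>: those are junk at the
  right endpoint, where \<open>seg_index\<close> is \<open>THE\<close> of an empty predicate, whereas a controlled
  process must be defined by integration up to and including it.\<close>

definition feedback_path ::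
  "('a::real_vector \<Rightarrow> 'a) \<Rightarrow> 'a \<Rightarrow> nat \<times> (nat \<Rightarrow> real) \<Rightarrow> (real \<Rightarrow> 'a) \<Rightarrow> (real \<Rightarrow> 'a) \<Rightarrow> bool" where
  "feedback_path V y P x v \<longleftrightarrow> (case P of (n, t) \<Rightarrow>
     \<forall>i s. i < n \<longrightarrow> t i \<le> s \<longrightarrow> s < t (Suc i) \<longrightarrow>
       x s = fb_node V y t i + (s - t i) *\<^sub>R V (fb_node V y t i) \<and> v s = V (fb_node V y t i))"

lemma feedback_path_fb:
  assumes "is_partition r P"
  shows "feedback_path V y P (fb_x V y P) (fb_v V y P)"
proof -
  obtain n t where P: "P = (n, t)" by fastforce
  show ?thesis
    using seg_index_eq[of r n t] assms unfolding P feedback_path_def fb_x_def fb_v_def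
    by (simp add: Let_def)
qed

lemma fb_node_eq_sum:
  "fb_node V y t i = y + (\<Sum>j<i. (t (Suc j) - t j) *\<^sub>R V (fb_node V y t j))"
  by (induction i) auto

lemma set_integral_sing:
  fixes F :: "real \<Rightarrow> 'b::euclidean_space"
  shows "set_integrable lborel {a..a} F" "(LINT s:{a..a}|lborel. F s) = 0"
proof -
  show si: "set_integrable lborel {a..a} F" by (rule borel_integrable_atLeastAtMost') simp
  show "(LINT s:{a..a}|lborel. F s) = 0" using set_borel_integral_eq_integral(2)[OF si] by simp
qed

lemma set_integral_append_continuous_piece:
  fixes F g :: "real \<Rightarrow> 'b::euclidean_space"
  assumes ab: "a \<le> b" and bc: "b \<le> c" and iF: "set_integrable lborel {a..b} F"
    and cg: "continuous_on {b..c} g" and eq: "\<And>s. b \<le> s \<Longrightarrow> s < c \<Longrightarrow> F s = g s"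
  shows "set_integrable lborel {a..c} F"
    "(LINT s:{a..c}|lborel. F s) = (LINT s:{a..b}|lborel. F s) + integral {b..c} g"
proof -
  have "set_integrable lborel {b..<c} g"
    by (rule set_integrable_subset[OF borel_integrable_atLeastAtMost'[OF cg]]) auto
  then have "set_integrable lborel {b..<c} F"
    by (subst set_integrable_cong[OF refl refl, of _ _ g]) (auto simp: eq)
  then have "set_integrable lborel ({a..b} \<union> ({b..<c} \<union> {c..c})) F"
    by (intro set_integrable_Un iF set_integral_sing) auto
  moreover have "{a..b} \<union> ({b..<c} \<union> {c..c}) = {a..c}" using ab bc by auto
  ultimately show si: "set_integrable lborel {a..c} F" by simp
  have "(LINT s:{a..c}|lborel. F s) = integral {a..c} F"
    by (rule set_borel_integral_eq_integral(2)[OF si])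
  also have "\<dots> = integral {a..b} F + integral {b..c} F"
    using Henstock_Kurzweil_Integration.integral_combine[OF ab bc set_borel_integral_eq_integral(1)[OF si]]
    by simp
  also have "integral {a..b} F = (LINT s:{a..b}|lborel. F s)"
    by (rule set_borel_integral_eq_integral(2)[OF iF, symmetric])
  also have "integral {b..c} F = integral {b..c} g"
    by (rule integral_spike[of "{c}"]) (auto simp: eq)
  finally show "(LINT s:{a..c}|lborel. F s) = (LINT s:{a..b}|lborel. F s) + integral {b..c} g" .
qed

lemma set_integral_piecewise_continuous:
  fixes F :: "real \<Rightarrow> 'b::euclidean_space" and g :: "nat \<Rightarrow> real \<Rightarrow> 'b"
  assumes mono: "\<And>i. i < n \<Longrightarrow> t i \<le> t (Suc i)"
    and cont: "\<And>i. i < n \<Longrightarrow> continuous_on {t i..t (Suc i)} (g i)"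
    and eq: "\<And>i s. i < n \<Longrightarrow> t i \<le> s \<Longrightarrow> s < t (Suc i) \<Longrightarrow> F s = g i s"
  shows "set_integrable lborel {t 0..t n} F \<and>
    (LINT s:{t 0..t n}|lborel. F s) = (\<Sum>i<n. integral {t i..t (Suc i)} (g i))"
  using mono cont eq
proof (induction n)
  case 0
  show ?case using set_integral_sing[of "t 0" F] by simp
next
  case (Suc n)
  have "t 0 \<le> t n" using Suc.prems(1) by (rule lift_Suc_mono_le_ivl[of "{..<Suc n}"]) auto
  from set_integral_append_continuous_piece[OF this _ _ Suc.prems(2)[of n] Suc.prems(3)[of n]]
  show ?case using Suc by simp
qed

lemma integral_partition_sum:
  fixes f :: "real \<Rightarrow> 'b::banach"
  assumes mono: "\<And>i. i < n \<Longrightarrow> t i \<le> t (Suc i)" and f: "f integrable_on {t 0..t n}"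
  shows "integral {t 0..t n} f = (\<Sum>i<n. integral {t i..t (Suc i)} f)"
  using mono f
proof (induction n)
  case (Suc n)
  have ab: "t 0 \<le> t n" using Suc.prems(1) by (rule lift_Suc_mono_le_ivl[of "{..<Suc n}"]) auto
  have bc: "t n \<le> t (Suc n)" using Suc.prems(1) by simp
  have "f integrable_on {t 0..t n}"
    by (rule integrable_subinterval_real[OF Suc.prems(2)]) (use bc in auto)
  then show ?case
    using Henstock_Kurzweil_Integration.integral_combine[OF ab bc Suc.prems(2)] Suc by simp
qed simp

lemma eventually_const_div_le:
  fixes C :: real
  assumes "\<epsilon> > 0"
  shows "eventually (\<lambda>r. 0 < r \<and> C / r \<le> \<epsilon>) at_top"
proof -
  have "((\<lambda>r. C / r) \<longlongrightarrow> 0) at_top" by (intro tendsto_divide_0[OF tendsto_const] filterlim_at_top_imp_at_infinity filterlim_ident)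
  then have "eventually (\<lambda>r. C / r < \<epsilon>) at_top" using assms by (rule order_tendstoD(2))
  moreover have "eventually (\<lambda>r::real. 0 < r) at_top" by (rule eventually_gt_at_top)
  ultimately show ?thesis by eventually_elim auto
qed

lemma eventually_le_of_le_plus_div:
  fixes f :: "real \<Rightarrow> ereal"
  assumes e: "\<epsilon> > 0" and bound: "\<And>r. r > 0 \<Longrightarrow> f r \<le> ereal (c + \<epsilon> / 2 + C / r)"
  shows "eventually (\<lambda>r. f r \<le> ereal (c + \<epsilon>)) at_top"
proof -
  have "eventually (\<lambda>r. 0 < r \<and> C / r \<le> \<epsilon> / 2) at_top"
    using e by (intro eventually_const_div_le) simp
  then show ?thesis
  proof eventually_elim
    case (elim r)
    then have "f r \<le> ereal (c + \<epsilon> / 2 + C / r)" by (intro bound) simp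
    also have "\<dots> \<le> ereal (c + \<epsilon>)" unfolding ereal_less_eq(3) using elim by linarith
    finally show ?case .
  qed
qed

lemma eventually_ge_of_ge_minus_div:
  fixes f :: "real \<Rightarrow> ereal"
  assumes e: "\<epsilon> > 0" and bound: "\<And>r. r > 0 \<Longrightarrow> ereal (c - \<epsilon> / 2 - C / r) \<le> f r"
  shows "eventually (\<lambda>r. ereal (c - \<epsilon>) \<le> f r) at_top"
proof -
  have "eventually (\<lambda>r. 0 < r \<and> C / r \<le> \<epsilon> / 2) at_top"
    using e by (intro eventually_const_div_le) simp
  then show ?thesis
  proof eventually_elim
    case (elim r)
    then have "ereal (c - \<epsilon>) \<le> ereal (c - \<epsilon> / 2 - C / r)" unfolding ereal_less_eq(3) by linarith
    also have "\<dots> \<le> f r" using elim by (intro bound) simp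
    finally show ?case .
  qed
qed

lemma integral_increment:
  fixes v :: "real \<Rightarrow> 'a::banach"
  assumes v: "v integrable_on {0..r}" and x: "\<And>s. s \<in> {0..r} \<Longrightarrow> x s = y + integral {0..s} v"
    and ab: "0 \<le> a" "a \<le> b" "b \<le> r"
  shows "x b = x a + integral {a..b} v"
proof -
  have "v integrable_on {0..b}" by (rule integrable_subinterval_real[OF v]) (use ab in auto)
  then have "integral {0..a} v + integral {a..b} v = integral {0..b} v"
    using ab by (intro Henstock_Kurzweil_Integration.integral_combine) auto
  then show ?thesis using x[of a] x[of b] ab by (simp add: algebra_simps)
qed

lemma feedback_controlled_process:
  fixes V :: "'a::euclidean_space \<Rightarrow> 'a" and y :: 'a
  assumes P: "is_partition r (n, t)"
  defines "x \<equiv> \<lambda>s. y + (LINT u:{0..s}|lborel. fb_v V y (n, t) u)"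
  shows "controlled_process r y x (fb_v V y (n, t))"
    and "feedback_path V y (n, t) x (fb_v V y (n, t))"
proof -
  define v where "v = fb_v V y (n, t)"
  define nd where "nd i = fb_node V y t i" for i
  note tP = is_partitionD[OF P]
  have v: "v s = V (nd i)" if "i < n" "t i \<le> s" "s < t (Suc i)" for i s
    using feedback_path_fb[OF P, of V y] that unfolding feedback_path_def v_def nd_def by simp
  have int: "set_integrable lborel {t 0..t m} v \<and>
      (LINT s:{t 0..t m}|lborel. v s) = (\<Sum>i<m. integral {t i..t (Suc i)} (\<lambda>_. V (nd i)))"
    if "m \<le> n" for m
    by (rule set_integral_piecewise_continuous) (use that tP(4) v in \<open>auto simp: less_imp_le\<close>)
  show "controlled_process r y x v"
    using int[of n] tP unfolding controlled_process_def x_def v_def by simp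
  have "x s = nd i + (s - t i) *\<^sub>R V (nd i)" if i: "i < n" "t i \<le> s" "s < t (Suc i)" for i s
  proof -
    have "t 0 \<le> t i" using partition_mono[OF P, of 0 i] i by simp
    from set_integral_append_continuous_piece(2)[OF this i(2) conjunct1[OF int[of i]], of "\<lambda>_. V (nd i)"]
    have "(LINT u:{t 0..s}|lborel. v u) = (\<Sum>j<i. integral {t j..t (Suc j)} (\<lambda>_. V (nd j)))
        + integral {t i..s} (\<lambda>_. V (nd i))"
      using int[of i] v[of i] i by simp
    also have "\<dots> = (\<Sum>j<i. (t (Suc j) - t j) *\<^sub>R V (nd j)) + (s - t i) *\<^sub>R V (nd i)"
      using tP(4) i by (simp add: less_imp_le)
    finally show ?thesis
      unfolding x_def v_def nd_def using tP(2) fb_node_eq_sum[of V y t i] by simp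
  qed
  then show "feedback_path V y (n, t) x v" using v unfolding feedback_path_def nd_def by simp
qed

lemma controlled_process_integral:
  assumes "controlled_process r y x v"
  shows "v integrable_on {0..r}"
    and "(\<lambda>s. norm (v s)) integrable_on {0..r}"
    and "\<And>s. s \<in> {0..r} \<Longrightarrow> x s = y + integral {0..s} v"
proof -
  have sv: "set_integrable lborel {0..r} v" and xs: "\<And>s. s \<in> {0..r} \<Longrightarrow> x s = y + (LINT t:{0..s}|lborel. v t)"
    using assms unfolding controlled_process_def by auto
  show "v integrable_on {0..r}" by (rule set_borel_integral_eq_integral(1)[OF sv])
  show "(\<lambda>s. norm (v s)) integrable_on {0..r}"
    by (rule set_borel_integral_eq_integral(1)[OF set_integrable_norm[OF sv]])
  fix s assume s: "s \<in> {0..r}"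
  have "set_integrable lborel {0..s} v" by (rule set_integrable_subset[OF sv]) (use s in auto)
  then show "x s = y + integral {0..s} v" using xs[OF s] set_borel_integral_eq_integral(2) by metis
qed

lemma controlled_process_continuous:
  assumes "controlled_process r y x v"
  shows "continuous_on {0..r} x"
proof -
  have "continuous_on {0..r} (\<lambda>s. y + integral {0..s} v)"
    by (intro continuous_intros indefinite_integral_continuous_1 controlled_process_integral(1)[OF assms])
  then show ?thesis by (rule continuous_on_eq) (use controlled_process_integral(3)[OF assms] in auto)
qed

lemma tendsto_ereal_squeeze:
  fixes f :: "'a \<Rightarrow> ereal"
  assumes lower: "\<And>\<epsilon>. \<epsilon> > 0 \<Longrightarrow> eventually (\<lambda>r. ereal (c - \<epsilon>) \<le> f r) F"
    and upper: "\<And>\<epsilon>. \<epsilon> > 0 \<Longrightarrow> eventually (\<lambda>r. f r \<le> ereal (c + \<epsilon>)) F"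
  shows "(f \<longlongrightarrow> ereal c) F"
proof (rule order_tendstoI)
  fix a assume "a < ereal c"
  then obtain a' where a': "a < ereal a'" "a' < c" using ereal_dense2 by fastforce
  show "eventually (\<lambda>r. a < f r) F"
    using lower[of "c - a'"] a' by (auto elim!: eventually_mono intro: less_le_trans)
next
  fix a assume "ereal c < a"
  then obtain a' where a': "ereal a' < a" "c < a'" using ereal_dense2 by fastforce
  show "eventually (\<lambda>r. f r < a) F"
    using upper[of "a' - c"] a' by (auto elim!: eventually_mono intro: le_less_trans)
qed

section \<open>Lagrangians and viscosity solutions\<close>

locale periodic_lagrangian =
  fixes L :: "'a::euclidean_space \<Rightarrow> 'a \<Rightarrow> real"
  assumes contL: "continuous_on UNIV (\<lambda>(x, v). L x v)"
    and perL: "\<And>v. periodic_fun (\<lambda>x. L x v)"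
    and superlin: "filterlim (\<lambda>v. INF x. L x v / norm v) at_top at_infinity"
begin

lemmas bounded_on_compact = periodic_bounded_on_compact[OF contL perL]

lemma uniformly_continuous_in_position:
  assumes "\<eta> > 0"
  obtains \<delta> where "\<delta> > 0" "\<And>z z' u. norm u \<le> V \<Longrightarrow> dist z z' < \<delta> \<Longrightarrow> \<bar>L z u - L z' u\<bar> < \<eta>"
proof -
  obtain B where B: "\<And>x. x \<in> cbox (0::'a) One \<Longrightarrow> norm x \<le> B"
    using bounded_cbox bounded_iff by metis
  let ?S = "cball (0::'a) (B + 1) \<times> cball (0::'a) V"
  have "uniformly_continuous_on ?S (\<lambda>(x, v). L x v)"
    by (intro compact_uniformly_continuous continuous_on_subset[OF contL] compact_Times) auto
  then obtain d where d: "d > 0"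
    "\<And>p q. p \<in> ?S \<Longrightarrow> q \<in> ?S \<Longrightarrow> dist q p < d \<Longrightarrow> dist ((\<lambda>(x, v). L x v) q) ((\<lambda>(x, v). L x v) p) < \<eta>"
    unfolding uniformly_continuous_on_def using assms by metis
  show ?thesis
  proof
    show "min d 1 > 0" using d(1) by simp
    fix z z' u :: 'a assume u: "norm u \<le> V" and dz: "dist z z' < min d 1"
    obtain k where k: "k \<in> int_lattice" "z - k \<in> cbox 0 One"
      using int_lattice_translate_into_cube .
    have n1: "norm (z - k) \<le> B" using B k by blast
    have dd: "dist (z - k) (z' - k) = dist z z'" by (simp add: dist_norm algebra_simps)
    have n2: "norm (z' - k) \<le> B + 1"
      using n1 dd dz norm_triangle_ineq[of "z - k" "z' - z"]
      by (auto simp: dist_norm norm_minus_commute algebra_simps)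
    have "dist (L (z' - k) u) (L (z - k) u) < \<eta>"
      using d(2)[of "(z - k, u)" "(z' - k, u)"] n1 n2 u dd dz by (auto simp: dist_Pair_Pair dist_commute)
    then show "\<bar>L z u - L z' u\<bar> < \<eta>"
      using periodic_fun_translate[OF perL k(1)] by (simp add: dist_real_def abs_minus_commute)
  qed
qed

lemma superlinear_dominates_affine:
  obtains R where "R > 0" "\<And>z u. R \<le> norm u \<Longrightarrow> P * norm u + c < L z u"
proof -
  define K where "K = P + \<bar>c\<bar> + 1"
  have "eventually (\<lambda>v. K \<le> (INF x. L x v / norm v)) at_infinity"
    using superlin unfolding filterlim_at_top by blast
  then obtain R0 where R0: "\<And>v. R0 \<le> norm v \<Longrightarrow> K \<le> (INF x. L x v / norm v)"
    unfolding eventually_at_infinity by blast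
  show ?thesis
  proof
    show "max R0 1 > 0" by simp
    fix z u :: 'a assume u: "max R0 1 \<le> norm u"
    obtain C where C: "\<And>z. \<bar>L z u\<bar> \<le> C"
      using bounded_on_compact[of "{u}"] by auto
    have "- C / norm u \<le> L x u / norm u" for x
      using C[of x] u by (intro divide_right_mono) (auto simp: abs_le_iff)
    then have "bdd_below (range (\<lambda>x. L x u / norm u))" by (rule bdd_belowI2)
    then have "(INF x. L x u / norm u) \<le> L z u / norm u" by (rule cINF_lower) simp
    then have "K \<le> L z u / norm u" using R0[of u] u by linarith
    moreover have "norm u > 0" using u by linarith
    ultimately have "K * norm u \<le> L z u" by (simp add: pos_le_divide_eq)
    moreover have "P * norm u + c < K * norm u"
      using u mult_left_mono[of 1 "norm u" "\<bar>c\<bar>"] unfolding K_def by (simp add: algebra_simps) linarith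
    ultimately show "P * norm u + c < L z u" by linarith
  qed
qed

lemma Ham_ge: "q \<bullet> v - L z v \<le> Ham L z q"
proof -
  obtain R where R: "R > 0" "\<And>z u. R \<le> norm u \<Longrightarrow> norm q * norm u + 0 < L z u"
    using superlinear_dominates_affine by metis
  obtain C where C: "\<And>z u. u \<in> cball 0 R \<Longrightarrow> \<bar>L z u\<bar> \<le> C"
    using bounded_on_compact[OF compact_cball] by metis
  have "q \<bullet> u - L z u \<le> norm q * R + C" for u
  proof -
    have qu: "q \<bullet> u \<le> norm q * norm u" by (rule Cauchy_Schwarz_ineq2[THEN abs_le_D1])
    have "0 \<le> C" using C[where z=z and u=0] R(1) by simp
    moreover have "0 \<le> norm q * R" using R(1) by simp
    moreover have "norm q * norm u \<le> norm q * R" if "norm u \<le> R"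
      using that by (simp add: mult_left_mono)
    ultimately show ?thesis using R(2)[of u z] C[where z=z and u=u] qu by force
  qed
  then show ?thesis unfolding Ham_def by (intro cSUP_upper bdd_aboveI2) auto
qed

lemma continuous_on_Lagrangian [continuous_intros]:
  "continuous_on S f \<Longrightarrow> continuous_on S g \<Longrightarrow> continuous_on S (\<lambda>s. L (f s) (g s))"
  using continuous_on_compose2[OF contL continuous_on_Pair, of S f g] by simp

end

locale viscosity_setting = periodic_lagrangian L
  for L :: "'a::euclidean_space \<Rightarrow> 'a \<Rightarrow> real" +
  fixes \<phi> :: "'a \<Rightarrow> real" and Hbar :: real
  assumes visc: "viscosity_solution L \<phi> Hbar"
begin

lemma phi_continuous: "continuous_on UNIV \<phi>"
  and phi_periodic: "periodic_fun \<phi>"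
  and Ham_superdiff_le: "p \<in> hadamard_superdiff \<phi> x \<Longrightarrow> Ham L x (- p) \<le> Hbar"
  and Ham_subdiff_ge: "p \<in> hadamard_subdiff \<phi> x \<Longrightarrow> Hbar \<le> Ham L x (- p)"
  using visc unfolding viscosity_solution_def by auto

lemma phi_bounded: "bounded (range \<phi>)"
  by (rule periodic_bounded[OF phi_continuous phi_periodic])

definition phi_sup_norm :: real where
  "phi_sup_norm = (SUP z. \<bar>\<phi> z\<bar>)"

lemma abs_phi_le: "\<bar>\<phi> z\<bar> \<le> phi_sup_norm"
proof -
  have "bdd_above (range (\<lambda>z. \<bar>\<phi> z\<bar>))"
    using phi_bounded unfolding bounded_real bdd_above_def by auto
  then show ?thesis unfolding phi_sup_norm_def by (rule cSUP_upper[OF UNIV_I])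
qed

lemma hadamard_superdiff_bounded:
  obtains C where "\<And>x p. p \<in> hadamard_superdiff \<phi> x \<Longrightarrow> norm p \<le> C"
proof -
  obtain C1 where C1: "\<And>z u. u \<in> cball 0 1 \<Longrightarrow> \<bar>L z u\<bar> \<le> C1"
    using bounded_on_compact[OF compact_cball] by metis
  show ?thesis
  proof
    fix x p assume "p \<in> hadamard_superdiff \<phi> x"
    then have "(- p) \<bullet> (- sgn p) - L x (- sgn p) \<le> Hbar"
      using Ham_ge[of "- p" "- sgn p" x] Ham_superdiff_le by (meson order_trans)
    moreover have "(- p) \<bullet> (- sgn p) = norm p"
      by (cases "p = 0") (simp_all add: sgn_div_norm power2_norm_eq_inner[symmetric] power2_eq_square)
    moreover have "L x (- sgn p) \<le> C1"
      using C1[where z=x and u="- sgn p"] by (simp add: norm_sgn abs_le_iff split: if_splits)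
    ultimately show "norm p \<le> Hbar + C1" by linarith
  qed
qed

lemma phi_lipschitz_exists: "\<exists>l>0. \<forall>x z. \<phi> z - \<phi> x \<le> l * norm (z - x)"
proof -
  obtain C where C: "\<And>x p. p \<in> hadamard_superdiff \<phi> x \<Longrightarrow> norm p \<le> C"
    using hadamard_superdiff_bounded by blast
  have "\<phi> z - \<phi> x \<le> (\<bar>C\<bar> + 1) * norm (z - x)" for x z
    by (rule lipschitz_of_bounded_hadamard_superdiff[OF phi_continuous phi_bounded C]) auto
  then show ?thesis by (intro exI[of _ "\<bar>C\<bar> + 1"]) auto
qed

definition lip_const :: real where
  "lip_const = (SOME l. l > 0 \<and> (\<forall>x z. \<phi> z - \<phi> x \<le> l * norm (z - x)))"

lemma lip_const_pos: "lip_const > 0"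
  and phi_lipschitz: "\<phi> z - \<phi> x \<le> lip_const * norm (z - x)"
  using someI_ex[OF phi_lipschitz_exists] unfolding lip_const_def by blast+

lemma speed_bound_exists:
  "\<exists>R>0. \<forall>z z' u. R \<le> norm u \<longrightarrow> max (L z' 0) (- Hbar) + 2 * lip_const * norm u < L z u"
proof -
  obtain C0 where C0: "\<And>z u. u \<in> {0} \<Longrightarrow> \<bar>L z u\<bar> \<le> C0"
    using bounded_on_compact[OF compact_sing] by metis
  obtain R where R: "R > 0" "\<And>z u. R \<le> norm u \<Longrightarrow> 2 * lip_const * norm u + (C0 + \<bar>Hbar\<bar>) < L z u"
    using superlinear_dominates_affine by blast
  have bnd: "max (L z' 0) (- Hbar) \<le> C0 + \<bar>Hbar\<bar>" for z'
    using C0[where z=z' and u=0] by (auto simp: abs_le_iff)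
  have "max (L z' 0) (- Hbar) + 2 * lip_const * norm u < L z u" if "R \<le> norm u" for z z' u
    using R(2)[OF that, of z] bnd[of z'] by linarith
  then show ?thesis using R(1) by blast
qed

text \<open>One threshold serves twice: feedback speeds stay below it (compare with speed \<open>0\<close>),
  and beyond it \<open>L\<close> dominates \<open>-Hbar - p \<bullet> u\<close> for every \<open>p\<close> with \<open>norm p \<le> 2 * lip_const\<close>.\<close>

definition speed_bound :: real where
  "speed_bound = (SOME R. R > 0 \<and>
     (\<forall>z z' u. R \<le> norm u \<longrightarrow> max (L z' 0) (- Hbar) + 2 * lip_const * norm u < L z u))"

lemma speed_bound_pos: "speed_bound > 0"
  and Lagrangian_gt_beyond_speed_bound:
    "speed_bound \<le> norm u \<Longrightarrow> max (L z' 0) (- Hbar) + 2 * lip_const * norm u < L z u"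
  using someI_ex[OF speed_bound_exists] unfolding speed_bound_def by blast+

section \<open>Lower bound along arbitrary controlled processes\<close>

lemma sup_conv_attained:
  assumes k: "\<kappa> > 0"
  shows "\<exists>\<beta>. \<forall>u. \<phi> (x + u) - (norm u)\<^sup>2 / (2 * \<kappa>\<^sup>2) \<le> \<phi> (x + \<beta>) - (norm \<beta>)\<^sup>2 / (2 * \<kappa>\<^sup>2)"
proof -
  define g where "g u = \<phi> (x + u) - (norm u)\<^sup>2 / (2 * \<kappa>\<^sup>2)" for u
  have "continuous_on (cball 0 (2 * lip_const * \<kappa>\<^sup>2)) g"
    unfolding g_def using k by (intro continuous_intros continuous_on_compose2[OF phi_continuous]) auto
  moreover have "0 \<le> 2 * lip_const * \<kappa>\<^sup>2" using lip_const_pos by simp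
  moreover have "g u \<le> g 0" if "u \<notin> cball 0 (2 * lip_const * \<kappa>\<^sup>2)" for u
  proof -
    have "\<not> \<phi> x + (norm u)\<^sup>2 / (2 * \<kappa>\<^sup>2) \<le> \<phi> (x + u)"
      using that norm_le_of_quadratic_gain[OF phi_lipschitz lip_const_pos k] by force
    then show ?thesis unfolding g_def by simp
  qed
  ultimately obtain \<beta> where "\<And>u. g u \<le> g \<beta>" by (metis continuous_on_cball_global_max)
  then show ?thesis unfolding g_def by blast
qed

definition sup_conv_arg :: "real \<Rightarrow> 'a \<Rightarrow> 'a" where
  "sup_conv_arg \<kappa> x = (SOME \<beta>. \<forall>u.
     \<phi> (x + u) - (norm u)\<^sup>2 / (2 * \<kappa>\<^sup>2) \<le> \<phi> (x + \<beta>) - (norm \<beta>)\<^sup>2 / (2 * \<kappa>\<^sup>2))"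

definition phi_sup_conv :: "real \<Rightarrow> 'a \<Rightarrow> real" where
  "phi_sup_conv \<kappa> x = \<phi> (x + sup_conv_arg \<kappa> x) - (norm (sup_conv_arg \<kappa> x))\<^sup>2 / (2 * \<kappa>\<^sup>2)"

definition sup_conv_grad :: "real \<Rightarrow> 'a \<Rightarrow> 'a" where
  "sup_conv_grad \<kappa> x = (1 / \<kappa>\<^sup>2) *\<^sub>R sup_conv_arg \<kappa> x"

lemma phi_sup_conv_ge:
  assumes "\<kappa> > 0"
  shows "\<phi> (x + u) - (norm u)\<^sup>2 / (2 * \<kappa>\<^sup>2) \<le> phi_sup_conv \<kappa> x"
  using someI_ex[OF sup_conv_attained[OF assms, of x]]
  unfolding phi_sup_conv_def sup_conv_arg_def by blast

lemma sup_conv_arg_norm_le: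
  assumes k: "\<kappa> > 0"
  shows "norm (sup_conv_arg \<kappa> x) \<le> 2 * lip_const * \<kappa>\<^sup>2"
proof (rule norm_le_of_quadratic_gain[OF phi_lipschitz lip_const_pos k])
  show "\<phi> x + (norm (sup_conv_arg \<kappa> x))\<^sup>2 / (2 * \<kappa>\<^sup>2) \<le> \<phi> (x + sup_conv_arg \<kappa> x)"
    using phi_sup_conv_ge[OF k, of x 0] unfolding phi_sup_conv_def by simp
qed

lemma sup_conv_grad_norm_le: "\<kappa> > 0 \<Longrightarrow> norm (sup_conv_grad \<kappa> x) \<le> 2 * lip_const"
  using sup_conv_arg_norm_le[of \<kappa> x] unfolding sup_conv_grad_def by (simp add: field_simps)

lemma abs_phi_sup_conv_le:
  assumes k: "\<kappa> > 0"
  shows "\<bar>phi_sup_conv \<kappa> x\<bar> \<le> phi_sup_norm"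
proof -
  have "\<phi> x \<le> phi_sup_conv \<kappa> x" using phi_sup_conv_ge[OF k, of x 0] by simp
  moreover have "phi_sup_conv \<kappa> x \<le> \<phi> (x + sup_conv_arg \<kappa> x)"
    unfolding phi_sup_conv_def by simp
  ultimately show ?thesis
    using abs_phi_le[of x] abs_phi_le[of "x + sup_conv_arg \<kappa> x"] by linarith
qed

lemma phi_sup_conv_increment:
  assumes k: "\<kappa> > 0"
  shows "phi_sup_conv \<kappa> x + sup_conv_grad \<kappa> x \<bullet> d - (norm d)\<^sup>2 / (2 * \<kappa>\<^sup>2) \<le> phi_sup_conv \<kappa> (x + d)"
proof -
  define \<beta> where "\<beta> = sup_conv_arg \<kappa> x"
  have "\<phi> (x + d + (\<beta> - d)) - (norm (\<beta> - d))\<^sup>2 / (2 * \<kappa>\<^sup>2) \<le> phi_sup_conv \<kappa> (x + d)"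
    by (rule phi_sup_conv_ge[OF k])
  moreover have "(norm (\<beta> - d))\<^sup>2 / (2 * \<kappa>\<^sup>2)
      = (norm \<beta>)\<^sup>2 / (2 * \<kappa>\<^sup>2) - sup_conv_grad \<kappa> x \<bullet> d + (norm d)\<^sup>2 / (2 * \<kappa>\<^sup>2)"
    using power2_norm_add[of \<beta> "- d"] k unfolding sup_conv_grad_def \<beta>_def by (simp add: field_simps)
  ultimately show ?thesis unfolding phi_sup_conv_def \<beta>_def by simp
qed

text \<open>At the maximiser a paraboloid touches \<open>\<phi>\<close> from above, so the supersolution
  inequality applies there with the gradient of that paraboloid.\<close>
lemma Lagrangian_ge_at_sup_conv_arg:
  assumes k: "\<kappa> > 0"
  shows "- (sup_conv_grad \<kappa> x \<bullet> u) - L (x + sup_conv_arg \<kappa> x) u \<le> Hbar"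
proof -
  define \<beta> where "\<beta> = sup_conv_arg \<kappa> x"
  have "\<phi> (x + \<beta> + w) \<le> \<phi> (x + \<beta>) + sup_conv_grad \<kappa> x \<bullet> w + (1 / (2 * \<kappa>\<^sup>2)) * (norm w)\<^sup>2" for w
  proof -
    have "\<phi> (x + (\<beta> + w)) - (norm (\<beta> + w))\<^sup>2 / (2 * \<kappa>\<^sup>2) \<le> \<phi> (x + \<beta>) - (norm \<beta>)\<^sup>2 / (2 * \<kappa>\<^sup>2)"
      using phi_sup_conv_ge[OF k] unfolding phi_sup_conv_def \<beta>_def by blast
    moreover have "(norm (\<beta> + w))\<^sup>2 / (2 * \<kappa>\<^sup>2)
        = (norm \<beta>)\<^sup>2 / (2 * \<kappa>\<^sup>2) + sup_conv_grad \<kappa> x \<bullet> w + (1 / (2 * \<kappa>\<^sup>2)) * (norm w)\<^sup>2"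
      using power2_norm_add[of \<beta> w] k unfolding sup_conv_grad_def \<beta>_def by (simp add: field_simps)
    ultimately show ?thesis by (simp add: add.assoc)
  qed
  then have "sup_conv_grad \<kappa> x \<in> hadamard_superdiff \<phi> (x + \<beta>)"
    by (intro quadratic_majorant_imp_hadamard_superdiff)
  then have "Ham L (x + \<beta>) (- sup_conv_grad \<kappa> x) \<le> Hbar" by (rule Ham_superdiff_le)
  then show ?thesis using Ham_ge[of "- sup_conv_grad \<kappa> x" u "x + \<beta>"] unfolding \<beta>_def by simp
qed

lemma Lagrangian_ge_near_sup_conv:
  assumes "\<eta> > 0"
  obtains \<delta> where "\<delta> > 0"
    "\<And>\<kappa> z z' u. \<kappa> > 0 \<Longrightarrow> dist z z' + 2 * lip_const * \<kappa>\<^sup>2 < \<delta> \<Longrightarrow>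
       - Hbar - \<eta> - sup_conv_grad \<kappa> z' \<bullet> u \<le> L z u"
proof -
  obtain \<delta> where \<delta>: "\<delta> > 0"
    "\<And>z z' u. norm u \<le> speed_bound \<Longrightarrow> dist z z' < \<delta> \<Longrightarrow> \<bar>L z u - L z' u\<bar> < \<eta>"
    using uniformly_continuous_in_position[OF assms] by blast
  show ?thesis
  proof (rule that[OF \<delta>(1)])
    fix \<kappa> and z z' u :: 'a assume k: "\<kappa> > 0" and d: "dist z z' + 2 * lip_const * \<kappa>\<^sup>2 < \<delta>"
    define p where "p = sup_conv_grad \<kappa> z'"
    have "- (p \<bullet> u) \<le> 2 * lip_const * norm u"
      using Cauchy_Schwarz_ineq2[of p u, THEN abs_le_D2]
        mult_right_mono[OF sup_conv_grad_norm_le[OF k, of z'] norm_ge_zero[of u]]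
      unfolding p_def by linarith
    moreover have "dist z (z' + sup_conv_arg \<kappa> z') < \<delta>"
      using dist_triangle[of z "z' + sup_conv_arg \<kappa> z'" z'] sup_conv_arg_norm_le[OF k, of z'] d
      by (simp add: dist_norm)
    ultimately show "- Hbar - \<eta> - p \<bullet> u \<le> L z u"
      using \<delta>(2)[of u z "z' + sup_conv_arg \<kappa> z'"] Lagrangian_ge_at_sup_conv_arg[OF k, of z' u]
        Lagrangian_gt_beyond_speed_bound[of u z' z] assms
      unfolding p_def by (cases "norm u \<le> speed_bound") auto
  qed
qed

lemma segment_cost_ge:
  assumes k: "\<kappa> > 0" and ab: "a \<le> b"
    and vint: "v integrable_on {a..b}" and nint: "(\<lambda>s. norm (v s)) integrable_on {a..b}"
    and Lint: "(\<lambda>s. L (x s) (v s)) integrable_on {a..b}"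
    and incr: "x b = x a + integral {a..b} v" and small: "norm (x b - x a) \<le> \<theta>"
    and lower: "\<And>s. s \<in> {a..b} \<Longrightarrow> - Hbar - \<eta> - sup_conv_grad \<kappa> (x a) \<bullet> v s \<le> L (x s) (v s)"
  shows "(- Hbar - \<eta>) * (b - a) + phi_sup_conv \<kappa> (x a) - phi_sup_conv \<kappa> (x b)
      - \<theta> * integral {a..b} (\<lambda>s. norm (v s)) / (2 * \<kappa>\<^sup>2) \<le> integral {a..b} (\<lambda>s. L (x s) (v s))"
proof -
  define p where "p = sup_conv_grad \<kappa> (x a)"
  define D where "D = x b - x a"
  have D: "D = integral {a..b} v" using incr unfolding D_def by simp
  have pv: "(\<lambda>s. p \<bullet> v s) integrable_on {a..b}"
    using integrable_linear[OF vint bounded_linear_inner_right[of p]] by (simp add: o_def)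
  have "integral {a..b} (\<lambda>s. - Hbar - \<eta> - p \<bullet> v s) \<le> integral {a..b} (\<lambda>s. L (x s) (v s))"
    using lower pv Lint unfolding p_def by (intro integral_le integrable_diff) auto
  moreover have "integral {a..b} (\<lambda>s. - Hbar - \<eta> - p \<bullet> v s) = (- Hbar - \<eta>) * (b - a) - p \<bullet> D"
    using ab pv integral_linear[OF vint bounded_linear_inner_right[of p]]
    by (subst integral_diff) (auto simp: D o_def)
  moreover have "phi_sup_conv \<kappa> (x a) + p \<bullet> D - (norm D)\<^sup>2 / (2 * \<kappa>\<^sup>2) \<le> phi_sup_conv \<kappa> (x b)"
    using phi_sup_conv_increment[OF k, of "x a" D] unfolding p_def D_def by simp
  moreover have "(norm D)\<^sup>2 \<le> \<theta> * integral {a..b} (\<lambda>s. norm (v s))"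
  proof -
    have "norm D \<le> integral {a..b} (\<lambda>s. norm (v s))"
      unfolding D by (rule integral_norm_bound_integral[OF vint nint]) simp
    then show ?thesis
      using small order_trans[OF norm_ge_zero small] unfolding D_def power2_eq_square
      by (intro mult_mono) auto
  qed
  then have "(norm D)\<^sup>2 / (2 * \<kappa>\<^sup>2) \<le> \<theta> * integral {a..b} (\<lambda>s. norm (v s)) / (2 * \<kappa>\<^sup>2)"
    using k by (intro divide_right_mono) auto
  ultimately show ?thesis by linarith
qed

lemma partition_cost_ge:
  assumes k: "\<kappa> > 0" and P: "is_partition r (n, t)"
    and vint: "v integrable_on {0..r}" and nint: "(\<lambda>s. norm (v s)) integrable_on {0..r}"
    and Lint: "(\<lambda>s. L (x s) (v s)) integrable_on {0..r}"
    and xeq: "\<And>s. s \<in> {0..r} \<Longrightarrow> x s = y + integral {0..s} v"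
    and small: "\<And>i. i < n \<Longrightarrow> norm (x (t (Suc i)) - x (t i)) \<le> \<theta>"
    and lower: "\<And>i s. i < n \<Longrightarrow> s \<in> {t i..t (Suc i)} \<Longrightarrow>
       - Hbar - \<eta> - sup_conv_grad \<kappa> (x (t i)) \<bullet> v s \<le> L (x s) (v s)"
  shows "(- Hbar - \<eta>) * r - 2 * phi_sup_norm - \<theta> * integral {0..r} (\<lambda>s. norm (v s)) / (2 * \<kappa>\<^sup>2)
    \<le> integral {0..r} (\<lambda>s. L (x s) (v s))"
proof -
  note tP = is_partitionD[OF P]
  have mono: "\<And>i. i < n \<Longrightarrow> t i \<le> t (Suc i)" using tP(4) by (simp add: less_imp_le)
  have sub: "{t i..t (Suc i)} \<subseteq> {0..r}" if "i < n" for i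
    using partition_mono[OF P, of 0 i] partition_mono[OF P, of "Suc i" n] that tP by auto
  define G where "G i = phi_sup_conv \<kappa> (x (t i))" for i
  define NV where "NV i = integral {t i..t (Suc i)} (\<lambda>s. norm (v s))" for i
  have seg: "(- Hbar - \<eta>) * (t (Suc i) - t i) + (G i - G (Suc i)) - \<theta> * NV i / (2 * \<kappa>\<^sup>2)
      \<le> integral {t i..t (Suc i)} (\<lambda>s. L (x s) (v s))" if i: "i < n" for i
  proof -
    have ints: "v integrable_on {t i..t (Suc i)}" "(\<lambda>s. norm (v s)) integrable_on {t i..t (Suc i)}"
        "(\<lambda>s. L (x s) (v s)) integrable_on {t i..t (Suc i)}"
      using integrable_subinterval_real[OF _ sub[OF i]] vint nint Lint by blast+
    have incr: "x (t (Suc i)) = x (t i) + integral {t i..t (Suc i)} v"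
      using sub[OF i] mono[OF i] by (intro integral_increment[OF vint xeq]) auto
    from segment_cost_ge[OF k mono[OF i] ints incr small[OF i] lower[OF i]]
    show ?thesis unfolding G_def NV_def by simp
  qed
  define A where "A i = (- Hbar - \<eta>) * (t (Suc i) - t i)" for i
  define B where "B i = G i - G (Suc i)" for i
  define C where "C i = \<theta> * NV i / (2 * \<kappa>\<^sup>2)" for i
  have "sum A {..<n} + sum B {..<n} - sum C {..<n} = (\<Sum>i<n. A i + B i - C i)"
    by (simp add: sum.distrib sum_subtractf)
  also have "\<dots> \<le> (\<Sum>i<n. integral {t i..t (Suc i)} (\<lambda>s. L (x s) (v s)))"
    using seg unfolding A_def B_def C_def by (intro sum_mono) simp
  also have "\<dots> = integral {0..r} (\<lambda>s. L (x s) (v s))"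
    using integral_partition_sum[of n t, OF mono, of "\<lambda>s. L (x s) (v s)"] Lint tP by simp
  finally have "sum A {..<n} + sum B {..<n} - sum C {..<n} \<le> integral {0..r} (\<lambda>s. L (x s) (v s))" .
  moreover have "sum A {..<n} = (- Hbar - \<eta>) * r"
    unfolding A_def using tP by (simp add: sum_distrib_left[symmetric] sum_lessThan_telescope)
  moreover have "sum B {..<n} = G 0 - G n" unfolding B_def by (rule sum_lessThan_telescope')
  moreover have "sum C {..<n} = \<theta> * integral {0..r} (\<lambda>s. norm (v s)) / (2 * \<kappa>\<^sup>2)"
    using integral_partition_sum[of n t, OF mono, of "\<lambda>s. norm (v s)"] nint tP
    unfolding C_def NV_def by (simp add: sum_distrib_left sum_divide_distrib)
  ultimately show ?thesis
    using abs_phi_sup_conv_le[OF k, of "x (t 0)"] abs_phi_sup_conv_le[OF k, of "x (t n)"]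
    unfolding G_def by linarith
qed

lemma controlled_process_integral_ge:
  assumes e: "\<epsilon> > 0" and r: "r > 0" and cp: "controlled_process r y x v"
    and Lint: "(\<lambda>s. L (x s) (v s)) integrable_on {0..r}"
  shows "(- Hbar - \<epsilon>) * r - 2 * phi_sup_norm \<le> integral {0..r} (\<lambda>s. L (x s) (v s))"
proof -
  note vint = controlled_process_integral[OF cp]
  define A where "A = integral {0..r} (\<lambda>s. norm (v s))"
  have A: "A \<ge> 0" unfolding A_def by (rule integral_nonneg[OF vint(2)]) simp
  obtain \<delta> where \<delta>: "\<delta> > 0" and near: "\<And>\<kappa> z z' u. \<kappa> > 0 \<Longrightarrow> dist z z' + 2 * lip_const * \<kappa>\<^sup>2 < \<delta> \<Longrightarrow>
       - Hbar - \<epsilon> / 2 - sup_conv_grad \<kappa> z' \<bullet> u \<le> L z u"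
    using Lagrangian_ge_near_sup_conv[of "\<epsilon> / 2"] e by auto
  define \<kappa> where "\<kappa> = sqrt (\<delta> / (4 * lip_const))"
  have k: "\<kappa> > 0" and k\<delta>: "2 * lip_const * \<kappa>\<^sup>2 = \<delta> / 2"
    unfolding \<kappa>_def using \<delta> lip_const_pos by simp_all
  \<comment> \<open>\<theta> is chosen after \<kappa>, so that the quadratic error of the sup-convolution stays below \<epsilon> r / 2.\<close>
  define \<theta> where "\<theta> = min (\<delta> / 2) (\<epsilon> * r * \<kappa>\<^sup>2 / (A + 1))"
  have \<theta>: "\<theta> > 0" unfolding \<theta>_def using \<delta> e r k A by simp
  obtain n t where P: "is_partition r (n, t)"
    and osc: "\<And>i s. i < n \<Longrightarrow> s \<in> {t i..t (Suc i)} \<Longrightarrow> dist (x s) (x (t i)) < \<theta>"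
    using partition_with_small_oscillation[OF controlled_process_continuous[OF cp] r \<theta>] by blast
  have "(- Hbar - \<epsilon> / 2) * r - 2 * phi_sup_norm - \<theta> * A / (2 * \<kappa>\<^sup>2)
      \<le> integral {0..r} (\<lambda>s. L (x s) (v s))"
    unfolding A_def
  proof (rule partition_cost_ge[OF k P vint(1,2) Lint vint(3)])
    fix i assume "i < n"
    then show "norm (x (t (Suc i)) - x (t i)) \<le> \<theta>"
      using osc[of i "t (Suc i)"] is_partitionD(4)[OF P] by (simp add: dist_norm less_imp_le)
  next
    fix i s assume "i < n" "s \<in> {t i..t (Suc i)}"
    then have "dist (x s) (x (t i)) + 2 * lip_const * \<kappa>\<^sup>2 < \<delta>"
      using osc k\<delta> unfolding \<theta>_def by fastforce
    then show "- Hbar - \<epsilon> / 2 - sup_conv_grad \<kappa> (x (t i)) \<bullet> v s \<le> L (x s) (v s)"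
      by (rule near[OF k])
  qed
  moreover have "\<theta> \<le> \<epsilon> * r * \<kappa>\<^sup>2 / (A + 1)" unfolding \<theta>_def by simp
  then have "\<theta> * (A + 1) \<le> \<epsilon> * r * \<kappa>\<^sup>2" using A by (simp add: pos_le_divide_eq)
  then have "\<theta> * A / (2 * \<kappa>\<^sup>2) \<le> \<epsilon> / 2 * r" using k \<theta> by (simp add: field_simps)
  ultimately show ?thesis by (simp add: algebra_simps)
qed

lemma controlled_process_cost_ge:
  assumes "\<epsilon> > 0" "r > 0" "controlled_process r y x v"
  shows "ereal ((- Hbar - \<epsilon>) * r - 2 * phi_sup_norm) \<le> cost L r x v"
proof (cases "set_integrable lborel {0..r} (\<lambda>s. L (x s) (v s))")
  case True
  then show ?thesis
    using controlled_process_integral_ge[OF assms set_borel_integral_eq_integral(1)[OF True]]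
      set_borel_integral_eq_integral(2)[OF True]
    unfolding cost_def by simp
qed (simp add: cost_def)

lemma avg_value_eventually_ge:
  assumes e: "\<epsilon> > 0"
  shows "eventually (\<lambda>r. ereal (- Hbar - \<epsilon>) \<le> avg_value L r y) at_top"
proof (rule eventually_ge_of_ge_minus_div[OF e])
  fix r :: real assume r: "r > 0"
  have "ereal ((- Hbar - \<epsilon> / 2) * r - 2 * phi_sup_norm)
      \<le> (INF xv\<in>{(x, v). controlled_process r y x v}. cost L r (fst xv) (snd xv))"
    using controlled_process_cost_ge[of "\<epsilon> / 2" r y] e r by (intro INF_greatest) auto
  then have "ereal ((- Hbar - \<epsilon> / 2) * r - 2 * phi_sup_norm) / ereal r \<le> avg_value L r y"
    unfolding avg_value_def using r by (intro ereal_divide_right_mono) auto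
  then show "ereal (- Hbar - \<epsilon> / 2 - 2 * phi_sup_norm / r) \<le> avg_value L r y"
    using r by (simp add: field_simps)
qed

end

section \<open>Upper bound along the discrete feedback\<close>

locale feedback_setting = viscosity_setting L \<phi> Hbar
  for L :: "'a::euclidean_space \<Rightarrow> 'a \<Rightarrow> real" and \<phi> Hbar +
  fixes b :: "real \<Rightarrow> 'a \<Rightarrow> 'a" and vv :: "real \<Rightarrow> 'a \<Rightarrow> 'a"
  assumes b_min: "\<And>\<kappa> x u. \<kappa> > 0 \<Longrightarrow>
       \<phi> (x + b \<kappa> x) + (norm (b \<kappa> x))\<^sup>2 / (2 * \<kappa>\<^sup>2) \<le> \<phi> (x + u) + (norm u)\<^sup>2 / (2 * \<kappa>\<^sup>2)"
    and vv_max: "\<And>\<kappa> x u. \<kappa> > 0 \<Longrightarrow>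
       (let p = (1 / \<kappa>\<^sup>2) *\<^sub>R (- b \<kappa> x) in
          - (p \<bullet> u) - L (x + b \<kappa> x) u \<le> - (p \<bullet> vv \<kappa> x) - L (x + b \<kappa> x) (vv \<kappa> x))"
begin

definition phi_inf_conv :: "real \<Rightarrow> 'a \<Rightarrow> real" where
  "phi_inf_conv \<kappa> x = \<phi> (x + b \<kappa> x) + (norm (b \<kappa> x))\<^sup>2 / (2 * \<kappa>\<^sup>2)"

definition inf_conv_grad :: "real \<Rightarrow> 'a \<Rightarrow> 'a" where
  "inf_conv_grad \<kappa> x = (1 / \<kappa>\<^sup>2) *\<^sub>R (- b \<kappa> x)"

lemma phi_inf_conv_le:
  "\<kappa> > 0 \<Longrightarrow> phi_inf_conv \<kappa> x \<le> \<phi> (x + u) + (norm u)\<^sup>2 / (2 * \<kappa>\<^sup>2)"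
  unfolding phi_inf_conv_def by (rule b_min)

lemma b_norm_le:
  assumes k: "\<kappa> > 0"
  shows "norm (b \<kappa> x) \<le> 2 * lip_const * \<kappa>\<^sup>2"
proof -
  have "norm (- b \<kappa> x) \<le> 2 * lip_const * \<kappa>\<^sup>2"
    using norm_le_of_quadratic_gain[OF phi_lipschitz lip_const_pos k, of "x + b \<kappa> x" "- b \<kappa> x"]
      phi_inf_conv_le[OF k, of x 0]
    by (simp add: phi_inf_conv_def)
  then show ?thesis by simp
qed

lemma inf_conv_grad_norm_le: "\<kappa> > 0 \<Longrightarrow> norm (inf_conv_grad \<kappa> x) \<le> 2 * lip_const"
  using b_norm_le[of \<kappa> x] unfolding inf_conv_grad_def by (simp add: field_simps)

lemma abs_phi_inf_conv_le:
  assumes k: "\<kappa> > 0"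
  shows "\<bar>phi_inf_conv \<kappa> x\<bar> \<le> phi_sup_norm"
proof -
  have "phi_inf_conv \<kappa> x \<le> \<phi> x" using phi_inf_conv_le[OF k, of x 0] by simp
  moreover have "\<phi> (x + b \<kappa> x) \<le> phi_inf_conv \<kappa> x" unfolding phi_inf_conv_def by simp
  ultimately show ?thesis using abs_phi_le[of x] abs_phi_le[of "x + b \<kappa> x"] by linarith
qed

lemma feedback_maximises:
  "\<kappa> > 0 \<Longrightarrow> - (inf_conv_grad \<kappa> x \<bullet> u) - L (x + b \<kappa> x) u
     \<le> - (inf_conv_grad \<kappa> x \<bullet> vv \<kappa> x) - L (x + b \<kappa> x) (vv \<kappa> x)"
  using vv_max unfolding inf_conv_grad_def Let_def by blast

text \<open>At the minimiser a paraboloid touches \<open>\<phi>\<close> from below, so the subsolution inequality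
  applies there, and the feedback realises the Hamiltonian.\<close>
lemma feedback_Lagrangian_le:
  assumes k: "\<kappa> > 0"
  shows "L (x + b \<kappa> x) (vv \<kappa> x) \<le> - Hbar - inf_conv_grad \<kappa> x \<bullet> vv \<kappa> x"
proof -
  define p where "p = inf_conv_grad \<kappa> x"
  define z where "z = x + b \<kappa> x"
  have "\<phi> z + p \<bullet> w - (1 / (2 * \<kappa>\<^sup>2)) * (norm w)\<^sup>2 \<le> \<phi> (z + w)" for w
  proof -
    have "phi_inf_conv \<kappa> x \<le> \<phi> (x + (b \<kappa> x + w)) + (norm (b \<kappa> x + w))\<^sup>2 / (2 * \<kappa>\<^sup>2)"
      by (rule phi_inf_conv_le[OF k])
    moreover have "(norm (b \<kappa> x + w))\<^sup>2 / (2 * \<kappa>\<^sup>2)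
        = (norm (b \<kappa> x))\<^sup>2 / (2 * \<kappa>\<^sup>2) - p \<bullet> w + (1 / (2 * \<kappa>\<^sup>2)) * (norm w)\<^sup>2"
      using power2_norm_add[of "b \<kappa> x" w] k unfolding p_def inf_conv_grad_def by (simp add: field_simps)
    ultimately show ?thesis unfolding phi_inf_conv_def z_def by (simp add: add.assoc)
  qed
  then have "p \<in> hadamard_subdiff \<phi> z" by (rule quadratic_minorant_imp_hadamard_subdiff)
  then have "Hbar \<le> Ham L z (- p)" by (rule Ham_subdiff_ge)
  also have "Ham L z (- p) \<le> - (p \<bullet> vv \<kappa> x) - L z (vv \<kappa> x)"
    by (rule Ham_le) (use feedback_maximises[OF k, of x] in \<open>simp add: p_def z_def\<close>)
  finally show ?thesis unfolding p_def z_def by simp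
qed

lemma feedback_speed_lt:
  assumes k: "\<kappa> > 0"
  shows "norm (vv \<kappa> x) < speed_bound"
proof (rule ccontr)
  define p where "p = inf_conv_grad \<kappa> x"
  define z where "z = x + b \<kappa> x"
  assume "\<not> norm (vv \<kappa> x) < speed_bound"
  then have "L z 0 + 2 * lip_const * norm (vv \<kappa> x) < L z (vv \<kappa> x)"
    using Lagrangian_gt_beyond_speed_bound[of "vv \<kappa> x" z z] by simp
  moreover have "L z (vv \<kappa> x) \<le> L z 0 - p \<bullet> vv \<kappa> x"
    using feedback_maximises[OF k, of x 0] unfolding p_def z_def by simp
  moreover have "- (p \<bullet> vv \<kappa> x) \<le> 2 * lip_const * norm (vv \<kappa> x)"
    using Cauchy_Schwarz_ineq2[of p "vv \<kappa> x", THEN abs_le_D2]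
      mult_right_mono[OF inf_conv_grad_norm_le[OF k, of x] norm_ge_zero[of "vv \<kappa> x"]]
    unfolding p_def by linarith
  ultimately show False by linarith
qed

lemma phi_inf_conv_step:
  assumes k: "\<kappa> > 0" and \<tau>: "\<tau> \<ge> 0"
  shows "\<tau> * L (x + b \<kappa> x) (vv \<kappa> x) \<le> - Hbar * \<tau> + phi_inf_conv \<kappa> x
           - phi_inf_conv \<kappa> (x + \<tau> *\<^sub>R vv \<kappa> x) + \<tau>\<^sup>2 * speed_bound\<^sup>2 / (2 * \<kappa>\<^sup>2)"
proof -
  define w where "w = vv \<kappa> x"
  define p where "p = inf_conv_grad \<kappa> x"
  have "phi_inf_conv \<kappa> (x + \<tau> *\<^sub>R w)
      \<le> \<phi> (x + \<tau> *\<^sub>R w + (b \<kappa> x - \<tau> *\<^sub>R w)) + (norm (b \<kappa> x - \<tau> *\<^sub>R w))\<^sup>2 / (2 * \<kappa>\<^sup>2)"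
    by (rule phi_inf_conv_le[OF k])
  also have "(norm (b \<kappa> x - \<tau> *\<^sub>R w))\<^sup>2 = (norm (b \<kappa> x))\<^sup>2 - 2 * \<tau> * (b \<kappa> x \<bullet> w) + \<tau>\<^sup>2 * (norm w)\<^sup>2"
    using power2_norm_add[of "b \<kappa> x" "- (\<tau> *\<^sub>R w)"] \<tau> by (simp add: power_mult_distrib)
  also have "\<phi> (x + \<tau> *\<^sub>R w + (b \<kappa> x - \<tau> *\<^sub>R w))
      + ((norm (b \<kappa> x))\<^sup>2 - 2 * \<tau> * (b \<kappa> x \<bullet> w) + \<tau>\<^sup>2 * (norm w)\<^sup>2) / (2 * \<kappa>\<^sup>2)
      = phi_inf_conv \<kappa> x + \<tau> * (p \<bullet> w) + \<tau>\<^sup>2 * (norm w)\<^sup>2 / (2 * \<kappa>\<^sup>2)"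
    using k unfolding phi_inf_conv_def p_def inf_conv_grad_def by (simp add: field_simps)
  also have "\<tau>\<^sup>2 * (norm w)\<^sup>2 \<le> \<tau>\<^sup>2 * speed_bound\<^sup>2"
    using feedback_speed_lt[OF k, of x] unfolding w_def
    by (intro mult_left_mono power_mono) auto
  finally have "phi_inf_conv \<kappa> (x + \<tau> *\<^sub>R w)
      \<le> phi_inf_conv \<kappa> x + \<tau> * (p \<bullet> w) + \<tau>\<^sup>2 * speed_bound\<^sup>2 / (2 * \<kappa>\<^sup>2)"
    using k by (simp add: divide_right_mono)
  moreover have "\<tau> * L (x + b \<kappa> x) w \<le> \<tau> * (- Hbar - p \<bullet> w)"
    using feedback_Lagrangian_le[OF k, of x] \<tau> unfolding p_def w_def by (intro mult_left_mono) auto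
  ultimately show ?thesis unfolding w_def by (simp add: algebra_simps)
qed

lemma feedback_segment_cost_le:
  assumes k: "\<kappa> > 0" and ac: "a \<le> c" "c - a \<le> d"
    and unif: "\<And>z z' u. norm u \<le> speed_bound \<Longrightarrow> dist z z' < \<delta> \<Longrightarrow> \<bar>L z u - L z' u\<bar> < \<eta>"
    and close: "d * speed_bound + 2 * lip_const * \<kappa>\<^sup>2 < \<delta>"
  shows "integral {a..c} (\<lambda>s. L (z + (s - a) *\<^sub>R vv \<kappa> z) (vv \<kappa> z))
    \<le> - Hbar * (c - a) + phi_inf_conv \<kappa> z - phi_inf_conv \<kappa> (z + (c - a) *\<^sub>R vv \<kappa> z)
       + (c - a) * (d * speed_bound\<^sup>2 / (2 * \<kappa>\<^sup>2) + \<eta>)"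
proof -
  define w where "w = vv \<kappa> z"
  have w: "norm w \<le> speed_bound" using feedback_speed_lt[OF k] unfolding w_def by (simp add: less_imp_le)
  have "L (z + (s - a) *\<^sub>R w) w \<le> L (z + b \<kappa> z) w + \<eta>" if s: "s \<in> {a..c}" for s
  proof -
    have "norm ((s - a) *\<^sub>R w) \<le> d * speed_bound"
      using s ac w by (auto intro!: mult_mono)
    then have "dist (z + (s - a) *\<^sub>R w) (z + b \<kappa> z) < \<delta>"
      using norm_triangle_ineq4[of "(s - a) *\<^sub>R w" "b \<kappa> z"] b_norm_le[OF k, of z] close
      by (simp add: dist_norm)
    then show ?thesis using unif[OF w] by fastforce
  qed
  then have "integral {a..c} (\<lambda>s. L (z + (s - a) *\<^sub>R w) w) \<le> integral {a..c} (\<lambda>s. L (z + b \<kappa> z) w + \<eta>)"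
    by (intro integral_le integrable_continuous_interval continuous_intros) auto
  also have "\<dots> = (c - a) * L (z + b \<kappa> z) w + (c - a) * \<eta>" using ac by (simp add: algebra_simps)
  also have "(c - a) * L (z + b \<kappa> z) w \<le> - Hbar * (c - a) + phi_inf_conv \<kappa> z
      - phi_inf_conv \<kappa> (z + (c - a) *\<^sub>R w) + (c - a)\<^sup>2 * speed_bound\<^sup>2 / (2 * \<kappa>\<^sup>2)"
    using phi_inf_conv_step[OF k, of "c - a" z] ac unfolding w_def by simp
  also have "(c - a)\<^sup>2 * speed_bound\<^sup>2 / (2 * \<kappa>\<^sup>2) \<le> (c - a) * (d * speed_bound\<^sup>2 / (2 * \<kappa>\<^sup>2))"
  proof -
    have "(c - a) * ((c - a) * speed_bound\<^sup>2) \<le> (c - a) * (d * speed_bound\<^sup>2)"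
      using ac by (intro mult_left_mono mult_right_mono) auto
    then show ?thesis using k by (simp add: power2_eq_square divide_right_mono mult.assoc)
  qed
  finally show ?thesis unfolding w_def by (simp add: algebra_simps)
qed

lemma feedback_path_cost_le:
  assumes k: "\<kappa> > 0" and P: "is_partition r (n, t)" and path: "feedback_path (vv \<kappa>) y (n, t) x v"
    and unif: "\<And>z z' u. norm u \<le> speed_bound \<Longrightarrow> dist z z' < \<delta> \<Longrightarrow> \<bar>L z u - L z' u\<bar> < \<eta>"
    and close: "fineness (n, t) * speed_bound + 2 * lip_const * \<kappa>\<^sup>2 < \<delta>"
  shows "set_integrable lborel {0..r} (\<lambda>s. L (x s) (v s)) \<and>
    (LINT s:{0..r}|lborel. L (x s) (v s))
      \<le> - Hbar * r + 2 * phi_sup_norm + r * (fineness (n, t) * speed_bound\<^sup>2 / (2 * \<kappa>\<^sup>2) + \<eta>)"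
proof -
  define c where "c = fineness (n, t) * speed_bound\<^sup>2 / (2 * \<kappa>\<^sup>2) + \<eta>"
  define nd where "nd i = fb_node (vv \<kappa>) y t i" for i
  define g where "g i s = L (nd i + (s - t i) *\<^sub>R vv \<kappa> (nd i)) (vv \<kappa> (nd i))" for i s
  note tP = is_partitionD[OF P]
  have PI: "set_integrable lborel {t 0..t n} (\<lambda>s. L (x s) (v s)) \<and>
      (LINT s:{t 0..t n}|lborel. L (x s) (v s)) = (\<Sum>i<n. integral {t i..t (Suc i)} (g i))"
    by (rule set_integral_piecewise_continuous)
      (use tP(4) path in \<open>auto simp: g_def nd_def feedback_path_def less_imp_le intro!: continuous_intros\<close>)
  have "integral {t i..t (Suc i)} (g i) \<le> - Hbar * (t (Suc i) - t i)
      + (phi_inf_conv \<kappa> (nd i) - phi_inf_conv \<kappa> (nd (Suc i))) + (t (Suc i) - t i) * c" if "i < n" for i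
  proof -
    have "integral {t i..t (Suc i)} (g i) \<le> - Hbar * (t (Suc i) - t i) + phi_inf_conv \<kappa> (nd i)
        - phi_inf_conv \<kappa> (nd i + (t (Suc i) - t i) *\<^sub>R vv \<kappa> (nd i)) + (t (Suc i) - t i) * c"
      unfolding g_def c_def
      by (rule feedback_segment_cost_le[OF k _ partition_step_le_fineness[OF that] unif close])
        (use tP(4)[OF that] in simp)
    then show ?thesis unfolding nd_def by simp
  qed
  then have "(\<Sum>i<n. integral {t i..t (Suc i)} (g i)) \<le> (\<Sum>i<n. - Hbar * (t (Suc i) - t i)
      + (phi_inf_conv \<kappa> (nd i) - phi_inf_conv \<kappa> (nd (Suc i))) + (t (Suc i) - t i) * c)"
    by (intro sum_mono) simp
  also have "\<dots> = - Hbar * (\<Sum>i<n. t (Suc i) - t i)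
      + (\<Sum>i<n. phi_inf_conv \<kappa> (nd i) - phi_inf_conv \<kappa> (nd (Suc i))) + (\<Sum>i<n. t (Suc i) - t i) * c"
    by (simp only: sum.distrib sum_distrib_left sum_distrib_right)
  also have "\<dots> = - Hbar * r + (phi_inf_conv \<kappa> (nd 0) - phi_inf_conv \<kappa> (nd n)) + r * c"
    using tP sum_lessThan_telescope'[of "\<lambda>i. phi_inf_conv \<kappa> (nd i)"] by (simp add: sum_lessThan_telescope)
  also have "phi_inf_conv \<kappa> (nd 0) - phi_inf_conv \<kappa> (nd n) \<le> 2 * phi_sup_norm"
    using abs_phi_inf_conv_le[OF k, of "nd 0"] abs_phi_inf_conv_le[OF k, of "nd n"] by linarith
  finally show ?thesis using PI tP unfolding c_def by simp
qed

definition feedback_cost_le_on_fine_partitions :: "real \<Rightarrow> real \<Rightarrow> bool" where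
  "feedback_cost_le_on_fine_partitions \<kappa> c \<longleftrightarrow> (\<exists>\<delta>>0. \<forall>r y P x v.
     is_partition r P \<longrightarrow> fineness P < \<delta> \<longrightarrow> feedback_path (vv \<kappa>) y P x v \<longrightarrow>
     set_integrable lborel {0..r} (\<lambda>s. L (x s) (v s)) \<and>
     (LINT s:{0..r}|lborel. L (x s) (v s)) \<le> (- Hbar + c) * r + 2 * phi_sup_norm)"

lemma feedback_cost_le_on_fine_partitionsE:
  assumes "feedback_cost_le_on_fine_partitions \<kappa> c"
  obtains \<delta> where "\<delta> > 0"
    "\<And>r y P x v. is_partition r P \<Longrightarrow> fineness P < \<delta> \<Longrightarrow> feedback_path (vv \<kappa>) y P x v \<Longrightarrow>
       set_integrable lborel {0..r} (\<lambda>s. L (x s) (v s))"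
    "\<And>r y P x v. is_partition r P \<Longrightarrow> fineness P < \<delta> \<Longrightarrow> feedback_path (vv \<kappa>) y P x v \<Longrightarrow>
       (LINT s:{0..r}|lborel. L (x s) (v s)) \<le> (- Hbar + c) * r + 2 * phi_sup_norm"
  using assms unfolding feedback_cost_le_on_fine_partitions_def by blast

lemma feedback_cost_le_on_fine_partitionsI:
  assumes k: "\<kappa> > 0" and e: "\<eta> < \<epsilon>"
    and unif: "\<And>z z' u. norm u \<le> speed_bound \<Longrightarrow> dist z z' < \<delta> \<Longrightarrow> \<bar>L z u - L z' u\<bar> < \<eta>"
    and k\<delta>: "2 * lip_const * \<kappa>\<^sup>2 < \<delta>"
  shows "feedback_cost_le_on_fine_partitions \<kappa> \<epsilon>"
  unfolding feedback_cost_le_on_fine_partitions_def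
proof (intro exI conjI allI impI)
  have R: "speed_bound > 0" by (rule speed_bound_pos)
  define \<delta>' where "\<delta>' = min ((\<delta> - 2 * lip_const * \<kappa>\<^sup>2) / speed_bound) (2 * (\<epsilon> - \<eta>) * \<kappa>\<^sup>2 / speed_bound\<^sup>2)"
  show "\<delta>' > 0" unfolding \<delta>'_def using k\<delta> R e k by simp
  fix r y P x v
  assume P: "is_partition r P" and fin: "fineness P < \<delta>'" and path: "feedback_path (vv \<kappa>) y P x v"
  obtain n t where Pnt: "P = (n, t)" by fastforce
  have "fineness P * speed_bound < \<delta> - 2 * lip_const * \<kappa>\<^sup>2"
    using fin R unfolding \<delta>'_def by (simp add: pos_less_divide_eq)
  then have close: "fineness (n, t) * speed_bound + 2 * lip_const * \<kappa>\<^sup>2 < \<delta>" using Pnt by simp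
  have "fineness P * speed_bound\<^sup>2 < 2 * (\<epsilon> - \<eta>) * \<kappa>\<^sup>2"
    using fin R unfolding \<delta>'_def by (simp add: pos_less_divide_eq)
  then have "fineness (n, t) * speed_bound\<^sup>2 / (2 * \<kappa>\<^sup>2) + \<eta> \<le> \<epsilon>"
    using k Pnt by (simp add: field_simps)
  moreover have "0 \<le> r" using partition_mono[OF P[unfolded Pnt], of 0 n] is_partitionD[OF P[unfolded Pnt]] by simp
  ultimately have "r * (fineness (n, t) * speed_bound\<^sup>2 / (2 * \<kappa>\<^sup>2) + \<eta>) \<le> \<epsilon> * r"
    by (metis mult.commute mult_left_mono)
  then show "set_integrable lborel {0..r} (\<lambda>s. L (x s) (v s))"
    and "(LINT s:{0..r}|lborel. L (x s) (v s)) \<le> (- Hbar + \<epsilon>) * r + 2 * phi_sup_norm"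
    using feedback_path_cost_le[OF k P[unfolded Pnt] path[unfolded Pnt] unif close]
    by (simp_all add: algebra_simps)
qed

lemma small_kappa_feedback_cost_le:
  assumes e: "\<epsilon> > 0"
  obtains \<kappa>0 where "\<kappa>0 > 0" "\<And>\<kappa>. \<kappa> \<in> {0<..\<kappa>0} \<Longrightarrow> feedback_cost_le_on_fine_partitions \<kappa> \<epsilon>"
proof -
  obtain \<delta> where \<delta>: "\<delta> > 0"
    and unif: "\<And>z z' u. norm u \<le> speed_bound \<Longrightarrow> dist z z' < \<delta> \<Longrightarrow> \<bar>L z u - L z' u\<bar> < \<epsilon> / 2"
    using uniformly_continuous_in_position[of "\<epsilon> / 2"] e by auto
  define \<kappa>0 where "\<kappa>0 = sqrt (\<delta> / (4 * lip_const))"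
  show ?thesis
  proof
    show "\<kappa>0 > 0" unfolding \<kappa>0_def using \<delta> lip_const_pos by simp
    fix \<kappa> assume "\<kappa> \<in> {0<..\<kappa>0}"
    then have k: "\<kappa> > 0" "\<kappa> \<le> \<kappa>0" by auto
    have "\<kappa>\<^sup>2 \<le> \<kappa>0\<^sup>2" using k by (intro power_mono) auto
    also have "\<kappa>0\<^sup>2 = \<delta> / (4 * lip_const)" unfolding \<kappa>0_def using \<delta> lip_const_pos by simp
    finally have "2 * lip_const * \<kappa>\<^sup>2 < \<delta>"
      using lip_const_pos \<delta> by (simp add: pos_le_divide_eq algebra_simps)
    then show "feedback_cost_le_on_fine_partitions \<kappa> \<epsilon>"
      using feedback_cost_le_on_fine_partitionsI[OF k(1) _ unif] e by simp
  qed
qed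

lemma avg_value_eventually_le:
  assumes e: "\<epsilon> > 0"
  shows "eventually (\<lambda>r. avg_value L r y \<le> ereal (- Hbar + \<epsilon>)) at_top"
proof (rule eventually_le_of_le_plus_div[OF e])
  obtain \<kappa> where "feedback_cost_le_on_fine_partitions \<kappa> (\<epsilon> / 2)"
    using small_kappa_feedback_cost_le[of "\<epsilon> / 2"] e by (metis greaterThanAtMost_iff half_gt_zero order_refl)
  then obtain \<delta> where \<delta>: "\<delta> > 0"
    and integrable: "\<And>r y P x v. is_partition r P \<Longrightarrow> fineness P < \<delta> \<Longrightarrow> feedback_path (vv \<kappa>) y P x v \<Longrightarrow>
       set_integrable lborel {0..r} (\<lambda>s. L (x s) (v s))"
    and cost: "\<And>r y P x v. is_partition r P \<Longrightarrow> fineness P < \<delta> \<Longrightarrow> feedback_path (vv \<kappa>) y P x v \<Longrightarrow>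
       (LINT s:{0..r}|lborel. L (x s) (v s)) \<le> (- Hbar + \<epsilon> / 2) * r + 2 * phi_sup_norm"
    by (elim feedback_cost_le_on_fine_partitionsE) blast
  fix r :: real assume r: "r > 0"
  obtain n t where P: "is_partition r (n, t)" and fin: "fineness (n, t) < \<delta>"
    using partition_with_fineness_less[OF r \<delta>] .
  define x where "x s = y + (LINT u:{0..s}|lborel. fb_v (vv \<kappa>) y (n, t) u)" for s
  note xv = feedback_controlled_process[OF P, where V = "vv \<kappa>" and y = y, folded x_def]
  have "avg_value L r y \<le> cost L r x (fb_v (vv \<kappa>) y (n, t)) / ereal r"
    unfolding avg_value_def using r xv(1)
    by (intro ereal_divide_right_mono INF_lower2[of "(x, fb_v (vv \<kappa>) y (n, t))"]) auto
  also have "\<dots> \<le> ereal ((- Hbar + \<epsilon> / 2) * r + 2 * phi_sup_norm) / ereal r"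
    using cost[OF P fin xv(2)] integrable[OF P fin xv(2)] r unfolding cost_def
    by (intro ereal_divide_right_mono) auto
  also have "\<dots> = ereal (- Hbar + \<epsilon> / 2 + 2 * phi_sup_norm / r)"
    using r by (simp add: field_simps)
  finally show "avg_value L r y \<le> ereal (- Hbar + \<epsilon> / 2 + 2 * phi_sup_norm / r)" .
qed

lemma limsup_fine_feedback_le:
  assumes "feedback_cost_le_on_fine_partitions \<kappa> c" and r: "r > 0"
  shows "limsup_fine r (fb_avg_cost L (vv \<kappa>) y r) \<le> ereal (- Hbar + c + 2 * phi_sup_norm / r)"
proof -
  obtain \<delta> where \<delta>: "\<delta> > 0"
    and cost: "\<And>r y P x v. is_partition r P \<Longrightarrow> fineness P < \<delta> \<Longrightarrow> feedback_path (vv \<kappa>) y P x v \<Longrightarrow>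
       (LINT s:{0..r}|lborel. L (x s) (v s)) \<le> (- Hbar + c) * r + 2 * phi_sup_norm"
    using assms(1) by (elim feedback_cost_le_on_fine_partitionsE) blast
  have "(SUP P\<in>{P. is_partition r P \<and> fineness P < \<delta>}. ereal (fb_avg_cost L (vv \<kappa>) y r P))
      \<le> ereal (- Hbar + c + 2 * phi_sup_norm / r)"
  proof (rule SUP_least)
    fix P assume "P \<in> {P. is_partition r P \<and> fineness P < \<delta>}"
    then have "(LINT s:{0..r}|lborel. L (fb_x (vv \<kappa>) y P s) (fb_v (vv \<kappa>) y P s))
        \<le> (- Hbar + c) * r + 2 * phi_sup_norm"
      using cost feedback_path_fb by blast
    then have "fb_avg_cost L (vv \<kappa>) y r P \<le> ((- Hbar + c) * r + 2 * phi_sup_norm) / r"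
      unfolding fb_avg_cost_def using r by (intro divide_right_mono) auto
    also have "\<dots> = - Hbar + c + 2 * phi_sup_norm / r" using r by (simp add: field_simps)
    finally show "ereal (fb_avg_cost L (vv \<kappa>) y r P) \<le> ereal (- Hbar + c + 2 * phi_sup_norm / r)"
      by simp
  qed
  then show ?thesis unfolding limsup_fine_def by (intro INF_lower2[of \<delta>]) (use \<delta> in auto)
qed

lemma feedback_avg_cost_limsup_le:
  assumes e: "\<epsilon> > 0"
  obtains \<kappa>0 where "\<kappa>0 > 0"
    "\<And>\<kappa> y. \<kappa> \<in> {0<..\<kappa>0} \<Longrightarrow>
       Limsup at_top (\<lambda>r. limsup_fine r (fb_avg_cost L (vv \<kappa>) y r)) \<le> ereal (- Hbar + \<epsilon>)"
proof -
  obtain \<kappa>0 where \<kappa>0: "\<kappa>0 > 0"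
    and fine: "\<And>\<kappa>. \<kappa> \<in> {0<..\<kappa>0} \<Longrightarrow> feedback_cost_le_on_fine_partitions \<kappa> (\<epsilon> / 2)"
    using small_kappa_feedback_cost_le[of "\<epsilon> / 2"] e by auto
  show ?thesis
  proof (rule that[OF \<kappa>0])
    fix \<kappa> y assume "\<kappa> \<in> {0<..\<kappa>0}"
    then have "eventually (\<lambda>r. limsup_fine r (fb_avg_cost L (vv \<kappa>) y r) \<le> ereal (- Hbar + \<epsilon>)) at_top"
      using limsup_fine_feedback_le[OF fine] by (intro eventually_le_of_le_plus_div[OF e]) simp
    then show "Limsup at_top (\<lambda>r. limsup_fine r (fb_avg_cost L (vv \<kappa>) y r)) \<le> ereal (- Hbar + \<epsilon>)"
      by (rule Limsup_bounded)
  qed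
qed

end

theorem corollary3:
  fixes L :: "'a::euclidean_space \<Rightarrow> 'a \<Rightarrow> real"
    and \<phi> :: "'a \<Rightarrow> real" and Hbar :: real
    and b :: "real \<Rightarrow> 'a \<Rightarrow> 'a" and vv :: "real \<Rightarrow> 'a \<Rightarrow> 'a"
  assumes contL: "continuous_on UNIV (\<lambda>(x, v). L x v)"
    and perL: "\<And>v. periodic_fun (\<lambda>x. L x v)"
    and superlin: "filterlim (\<lambda>v. INF x. L x v / norm v) at_top at_infinity"
    and visc: "viscosity_solution L \<phi> Hbar"
    and b_min: "\<And>\<kappa> x u. \<kappa> > 0 \<Longrightarrow>
       \<phi> (x + b \<kappa> x) + (norm (b \<kappa> x))\<^sup>2 / (2 * \<kappa>\<^sup>2) \<le> \<phi> (x + u) + (norm u)\<^sup>2 / (2 * \<kappa>\<^sup>2)"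
    and vv_max: "\<And>\<kappa> x u. \<kappa> > 0 \<Longrightarrow>
       (let p = (1 / \<kappa>\<^sup>2) *\<^sub>R (- b \<kappa> x) in
          - (p \<bullet> u) - L (x + b \<kappa> x) u \<le> - (p \<bullet> vv \<kappa> x) - L (x + b \<kappa> x) (vv \<kappa> x))"
  shows "(\<forall>y. ((\<lambda>r. avg_value L r y) \<longlongrightarrow> ereal (- Hbar)) at_top) \<and>
         (\<forall>\<epsilon>>0. \<exists>\<kappa>0>0. \<forall>\<kappa>\<in>{0<..\<kappa>0}. \<forall>y.
            Limsup at_top (\<lambda>r. limsup_fine r (fb_avg_cost L (vv \<kappa>) y r)) \<le> ereal (- Hbar + \<epsilon>))"
proof -
  interpret feedback_setting L \<phi> Hbar b vv
    by unfold_locales (fact contL perL superlin visc b_min vv_max)+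
  show ?thesis
  proof (intro conjI allI impI)
    fix y
    show "((\<lambda>r. avg_value L r y) \<longlongrightarrow> ereal (- Hbar)) at_top"
      by (rule tendsto_ereal_squeeze[OF avg_value_eventually_ge avg_value_eventually_le])
  next
    fix \<epsilon> :: real assume "\<epsilon> > 0"
    obtain \<kappa>0 where "\<kappa>0 > 0" "\<And>\<kappa> y. \<kappa> \<in> {0<..\<kappa>0} \<Longrightarrow>
        Limsup at_top (\<lambda>r. limsup_fine r (fb_avg_cost L (vv \<kappa>) y r)) \<le> ereal (- Hbar + \<epsilon>)"
      using feedback_avg_cost_limsup_le[OF \<open>\<epsilon> > 0\<close>] by blast
    then show "\<exists>\<kappa>0>0. \<forall>\<kappa>\<in>{0<..\<kappa>0}. \<forall>y.
        Limsup at_top (\<lambda>r. limsup_fine r (fb_avg_cost L (vv \<kappa>) y r)) \<le> ereal (- Hbar + \<epsilon>)"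
      by blast
  qed
qed

end
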